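(* Let $T>0$, $\mathbb{U}\subset\mathbb{R}^m$ compact non-empty, and $f:[0,T]\times\mathbb{R}^n\times\mathbb{U}\to\mathbb{R}^n$ continuous, Lipschitz in $x$ uniformly in $(s,u)$, with $f(s,x,\mathbb{U})=\{f(s,x,u)\,|\,u\in\mathbb{U}\}$ convex for all $(s,x)\in[0,T]\times\mathbb{R}^n$. Let $g\in C(\mathbb{R}^n;\mathbb{R})$ be of class $\mathcal{Z}$ and let $v(t,x)=\inf_{u\in\mathcal{U}[t,T]}g(\varphi(T;t,x,u))$. Then for every $t\in[0,T]$ the map $x\mapsto v(t,x)$ is of class $\mathcal{Z}$.
   Context: $\mathcal{U}[t,T]$ is the set of measurable maps $u:[t,T]\to\mathbb{U}$, and $\varphi(\cdot;t,x,u)$ denotes the unique absolutely continuous solution of $\dot{x}(s)=f(s,x(s),u(s))$ for a.e. $s\in(t,T)$, $x(t)=x$. A function $z:\mathbb{R}^n\to\mathbb{R}$ is of class $\mathcal{Z}$ if for every $\bar{x}$ with $z(\bar{x})=0$ and every $r>0$ there exists $x$ with $\|x-\bar{x}\|<r$ and $z(x)<0$. *)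

theory Defs
  imports "HOL-Analysis.Analysis"
begin

definition classZ :: "('a::real_normed_vector \<Rightarrow> real) \<Rightarrow> bool" where
  "classZ z \<longleftrightarrow> (\<forall>xb. z xb = 0 \<longrightarrow> (\<forall>r>0. \<exists>x. norm (x - xb) < r \<and> z x < 0))"

definition abs_cont_on :: "real \<Rightarrow> real \<Rightarrow> (real \<Rightarrow> 'a::real_normed_vector) \<Rightarrow> bool" where
  "abs_cont_on a b y \<longleftrightarrow>
     (\<forall>\<epsilon>>0. \<exists>\<delta>>0. \<forall>(N::nat) (c::nat \<Rightarrow> real) (d::nat \<Rightarrow> real).
        (\<forall>k<N. a \<le> c k \<and> c k \<le> d k \<and> d k \<le> b) \<and>
        (\<forall>i<N. \<forall>j<N. i \<noteq> j \<longrightarrow> d i \<le> c j \<or> d j \<le> c i) \<and>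
        (\<Sum>k<N. d k - c k) < \<delta>
        \<longrightarrow> (\<Sum>k<N. norm (y (d k) - y (c k))) < \<epsilon>)"

definition controls :: "'m::euclidean_space set \<Rightarrow> real \<Rightarrow> real \<Rightarrow> (real \<Rightarrow> 'm) set" where
  "controls U t T = {u. u \<in> borel_measurable (lebesgue_on {t..T}) \<and> (\<forall>s\<in>{t..T}. u s \<in> U)}"

definition is_solution ::
  "(real \<Rightarrow> 'n::euclidean_space \<Rightarrow> 'm \<Rightarrow> 'n) \<Rightarrow> real \<Rightarrow> real \<Rightarrow> 'n \<Rightarrow> (real \<Rightarrow> 'm) \<Rightarrow> (real \<Rightarrow> 'n) \<Rightarrow> bool" where
  "is_solution f t T x u y \<longleftrightarrow>
     abs_cont_on t T y \<and> y t = x \<and>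
     (AE s in lebesgue. s \<in> {t<..<T} \<longrightarrow> (y has_vector_derivative f s (y s) (u s)) (at s))"

definition traj ::
  "(real \<Rightarrow> 'n::euclidean_space \<Rightarrow> 'm \<Rightarrow> 'n) \<Rightarrow> real \<Rightarrow> real \<Rightarrow> 'n \<Rightarrow> (real \<Rightarrow> 'm) \<Rightarrow> real \<Rightarrow> 'n" where
  "traj f t T x u = (THE y. is_solution f t T x u y \<and> (\<forall>s. s \<notin> {t..T} \<longrightarrow> y s = x))"

definition value_fun ::
  "(real \<Rightarrow> 'n::euclidean_space \<Rightarrow> 'm::euclidean_space \<Rightarrow> 'n) \<Rightarrow> 'm set \<Rightarrow> ('n \<Rightarrow> real) \<Rightarrow> real \<Rightarrow> real \<Rightarrow> 'n \<Rightarrow> real" where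
  "value_fun f U g T t x = (INF u\<in>controls U t T. g (traj f t T x u T))"

end

theory Submission
  imports Defs
begin

text \<open>Let v(t, xb) = 0. The endpoints phi(T; t, xb, u) of all controls u form a bounded set
  on which the infimum of g is 0, so g vanishes somewhere on its closure, and as g is of class Z
  there is a point y close to some endpoint phi(T; t, xb, u) with g y < 0. Solving the equation
  backwards from y with the same control gives an initial state z with
  |z - xb| \<le> exp (L (T - t)) |y - phi(T; t, xb, u)| by Gronwall's inequality, and v(t, z) \<le> g y < 0.

  Most of the work is the Caratheodory theory that makes phi well defined: existence by Picard
  iteration, which needs Lebesgue's differentiation theorem for the bounded measurable integrand
  s \<mapsto> f(s, y(s), u(s)), and uniqueness together with the Gronwall estimate, which follow from
  a bound on the a.e. derivative of ln (e + |z1 - z2|^2) and the fact, proved via Lusin's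
  property (N), that an absolutely continuous function whose a.e. derivative is at most K grows
  with slope at most K.\<close>

section \<open>Absolutely continuous functions\<close>

definition nonoverlapping_subintervals ::
    "real \<Rightarrow> real \<Rightarrow> nat \<Rightarrow> (nat \<Rightarrow> real) \<Rightarrow> (nat \<Rightarrow> real) \<Rightarrow> bool" where
  "nonoverlapping_subintervals a b N c d \<longleftrightarrow>
     (\<forall>k<N. a \<le> c k \<and> c k \<le> d k \<and> d k \<le> b) \<and> (\<forall>i<N. \<forall>j<N. i \<noteq> j \<longrightarrow> d i \<le> c j \<or> d j \<le> c i)"

lemma abs_cont_on_iff:
  "abs_cont_on a b y \<longleftrightarrow> (\<forall>e>0. \<exists>\<delta>>0. \<forall>N c d. nonoverlapping_subintervals a b N c d \<longrightarrow>
     (\<Sum>k<N. d k - c k) < \<delta> \<longrightarrow> (\<Sum>k<N. norm (y (d k) - y (c k))) < e)"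
  unfolding abs_cont_on_def nonoverlapping_subintervals_def by (simp only: imp_conjL)

lemma abs_cont_onI:
  assumes "\<And>e. e > 0 \<Longrightarrow> \<exists>\<delta>>0. \<forall>N c d. nonoverlapping_subintervals a b N c d \<longrightarrow>
     (\<Sum>k<N. d k - c k) < \<delta> \<longrightarrow> (\<Sum>k<N. norm (y (d k) - y (c k))) < e"
  shows "abs_cont_on a b y"
  unfolding abs_cont_on_iff using assms by blast

lemma abs_cont_onE:
  assumes "abs_cont_on a b y" "e > 0"
  obtains \<delta> where "\<delta> > 0" "\<And>N c d. nonoverlapping_subintervals a b N c d \<Longrightarrow>
     (\<Sum>k<N. d k - c k) < \<delta> \<Longrightarrow> (\<Sum>k<N. norm (y (d k) - y (c k))) < e"
  using assms unfolding abs_cont_on_iff by meson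

lemma abs_cont_on_finite_family:
  fixes y :: "real \<Rightarrow> 'a::real_normed_vector"
  assumes "abs_cont_on a b y" "e > 0"
  shows "\<exists>\<delta>>0. \<forall>(F :: 'i set) c d. finite F \<longrightarrow> (\<forall>i\<in>F. a \<le> c i \<and> c i \<le> d i \<and> d i \<le> b) \<longrightarrow>
      (\<forall>i\<in>F. \<forall>j\<in>F. i \<noteq> j \<longrightarrow> d i \<le> c j \<or> d j \<le> c i) \<longrightarrow> (\<Sum>i\<in>F. d i - c i) < \<delta> \<longrightarrow>
      (\<Sum>i\<in>F. norm (y (d i) - y (c i))) < e"
proof -
  obtain \<delta> where \<delta>: "\<delta> > 0" and small: "\<And>N c d. nonoverlapping_subintervals a b N c d \<Longrightarrow>
     (\<Sum>k<N. d k - c k) < \<delta> \<Longrightarrow> (\<Sum>k<N. norm (y (d k) - y (c k))) < e"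
    using abs_cont_onE[OF assms] by blast
  have "(\<Sum>i\<in>F. norm (y (d i) - y (c i))) < e"
    if F: "finite F" and ivl: "\<forall>i\<in>F. a \<le> c i \<and> c i \<le> d i \<and> d i \<le> b"
      and disj: "\<forall>i\<in>F. \<forall>j\<in>F. i \<noteq> j \<longrightarrow> d i \<le> c j \<or> d j \<le> c i" and len: "(\<Sum>i\<in>F. d i - c i) < \<delta>"
    for F :: "'i set" and c d
  proof -
    obtain h where h: "bij_betw h {..<card F} F"
      using ex_bij_betw_nat_finite[OF F] by (auto simp: atLeast0LessThan)
    have reindex: "(\<Sum>k<card F. w (h k)) = (\<Sum>i\<in>F. w i)" for w :: "'i \<Rightarrow> real"
      using sum.reindex_bij_betw[OF h] .
    have hF: "h k \<in> F" if "k < card F" for k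
      using h that by (auto simp: bij_betw_def)
    have h_inj: "h i \<noteq> h j" if "i < card F" "j < card F" "i \<noteq> j" for i j
      using h that by (auto simp: bij_betw_def inj_on_def)
    have "nonoverlapping_subintervals a b (card F) (c \<circ> h) (d \<circ> h)"
      using ivl disj hF h_inj unfolding nonoverlapping_subintervals_def by simp
    from small[OF this] show ?thesis
      using len reindex[of "\<lambda>i. d i - c i"] reindex[of "\<lambda>i. norm (y (d i) - y (c i))"] by simp
  qed
  with \<delta> show ?thesis
    by blast
qed

lemma abs_cont_on_dominated:
  fixes y :: "real \<Rightarrow> 'a::real_normed_vector" and z :: "real \<Rightarrow> 'b::real_normed_vector"
  assumes y: "abs_cont_on a b y"
    and dom: "\<And>s r. s \<in> {a..b} \<Longrightarrow> r \<in> {a..b} \<Longrightarrow> norm (z s - z r) \<le> K * norm (y s - y r)"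
  shows "abs_cont_on a b z"
proof (rule abs_cont_onI)
  fix e :: real assume e: "e > 0"
  define K' where "K' = max K 0 + 1"
  have K': "K' > 0" "K \<le> K'" by (auto simp: K'_def)
  obtain \<delta> where "\<delta> > 0" and small: "\<And>N c d. nonoverlapping_subintervals a b N c d \<Longrightarrow>
     (\<Sum>k<N. d k - c k) < \<delta> \<Longrightarrow> (\<Sum>k<N. norm (y (d k) - y (c k))) < e / K'"
    using abs_cont_onE[OF y divide_pos_pos[OF e K'(1)]] by blast
  have "(\<Sum>k<N. norm (z (d k) - z (c k))) < e"
    if ivl: "nonoverlapping_subintervals a b N c d" and len: "(\<Sum>k<N. d k - c k) < \<delta>" for N c d
  proof -
    have "(\<Sum>k<N. norm (z (d k) - z (c k))) \<le> (\<Sum>k<N. K' * norm (y (d k) - y (c k)))"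
    proof (rule sum_mono)
      fix k assume "k \<in> {..<N}"
      then have "norm (z (d k) - z (c k)) \<le> K * norm (y (d k) - y (c k))"
        using ivl dom unfolding nonoverlapping_subintervals_def by auto
      also have "\<dots> \<le> K' * norm (y (d k) - y (c k))"
        using K' by (intro mult_right_mono) auto
      finally show "norm (z (d k) - z (c k)) \<le> K' * norm (y (d k) - y (c k))" .
    qed
    also have "\<dots> = K' * (\<Sum>k<N. norm (y (d k) - y (c k)))"
      by (simp add: sum_distrib_left)
    also have "\<dots> < K' * (e / K')"
      using small[OF ivl len] K' by (intro mult_strict_left_mono)
    finally show ?thesis
      using K' by simp
  qed
  then show "\<exists>\<delta>>0. \<forall>N c d. nonoverlapping_subintervals a b N c d \<longrightarrow>
     (\<Sum>k<N. d k - c k) < \<delta> \<longrightarrow> (\<Sum>k<N. norm (z (d k) - z (c k))) < e"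
    using \<open>\<delta> > 0\<close> by blast
qed

lemma abs_cont_on_ident: "abs_cont_on a b (\<lambda>s. s)"
proof (rule abs_cont_onI)
  fix e :: real assume "e > 0"
  moreover have "(\<Sum>k<N. norm (d k - c k)) = (\<Sum>k<N. d k - c k)"
    if "nonoverlapping_subintervals a b N c d" for N c d
    using that unfolding nonoverlapping_subintervals_def by (intro sum.cong) auto
  ultimately show "\<exists>\<delta>>0. \<forall>N c d. nonoverlapping_subintervals a b N c d \<longrightarrow>
     (\<Sum>k<N. d k - c k) < \<delta> \<longrightarrow> (\<Sum>k<N. norm (d k - c k)) < e"
    by auto
qed

lemma abs_cont_on_lipschitz:
  fixes y :: "real \<Rightarrow> 'a::real_normed_vector"
  assumes "\<And>s r. s \<in> {a..b} \<Longrightarrow> r \<in> {a..b} \<Longrightarrow> norm (y s - y r) \<le> M * \<bar>s - r\<bar>"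
  shows "abs_cont_on a b y"
  using abs_cont_on_dominated[OF abs_cont_on_ident, where z=y and K=M] assms by simp

lemma abs_cont_on_subinterval:
  assumes "abs_cont_on a b y" "a \<le> a'" "b' \<le> b"
  shows "abs_cont_on a' b' y"
proof -
  have "nonoverlapping_subintervals a b N c d" if "nonoverlapping_subintervals a' b' N c d" for N c d
    using that assms(2,3) unfolding nonoverlapping_subintervals_def by force
  then show ?thesis
    using assms(1) unfolding abs_cont_on_iff by meson
qed

lemma abs_cont_on_imp_continuous_on:
  fixes y :: "real \<Rightarrow> 'a::real_normed_vector"
  assumes "abs_cont_on a b y"
  shows "continuous_on {a..b} y"
  unfolding continuous_on_iff
proof (intro ballI allI impI)
  fix x e assume x: "x \<in> {a..b}" and e: "(e::real) > 0"
  obtain \<delta> where \<delta>: "\<delta> > 0" and small: "\<And>N c d. nonoverlapping_subintervals a b N c d \<Longrightarrow>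
     (\<Sum>k<N. d k - c k) < \<delta> \<Longrightarrow> (\<Sum>k<N. norm (y (d k) - y (c k))) < e"
    using abs_cont_onE[OF assms e] by blast
  have "dist (y x') (y x) < e" if "x' \<in> {a..b}" "dist x' x < \<delta>" for x'
    using small[of 1 "\<lambda>_. min x x'" "\<lambda>_. max x x'"] that x
    by (cases "x \<le> x'") (auto simp: nonoverlapping_subintervals_def dist_norm norm_minus_commute)
  then show "\<exists>d>0. \<forall>x'\<in>{a..b}. dist x' x < d \<longrightarrow> dist (y x') (y x) < e"
    using \<delta> by blast
qed

lemma abs_cont_on_diff:
  fixes y z :: "real \<Rightarrow> 'a::real_normed_vector"
  assumes y: "abs_cont_on a b y" and z: "abs_cont_on a b z"
  shows "abs_cont_on a b (\<lambda>s. y s - z s)"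
proof (rule abs_cont_onI)
  fix e :: real assume e: "e > 0"
  obtain \<delta>1 where "\<delta>1 > 0" and small1: "\<And>N c d. nonoverlapping_subintervals a b N c d \<Longrightarrow>
     (\<Sum>k<N. d k - c k) < \<delta>1 \<Longrightarrow> (\<Sum>k<N. norm (y (d k) - y (c k))) < e / 2"
    using abs_cont_onE[OF y half_gt_zero[OF e]] by blast
  obtain \<delta>2 where "\<delta>2 > 0" and small2: "\<And>N c d. nonoverlapping_subintervals a b N c d \<Longrightarrow>
     (\<Sum>k<N. d k - c k) < \<delta>2 \<Longrightarrow> (\<Sum>k<N. norm (z (d k) - z (c k))) < e / 2"
    using abs_cont_onE[OF z half_gt_zero[OF e]] by blast
  have "(\<Sum>k<N. norm ((y (d k) - z (d k)) - (y (c k) - z (c k)))) < e"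
    if ivl: "nonoverlapping_subintervals a b N c d" and len: "(\<Sum>k<N. d k - c k) < min \<delta>1 \<delta>2" for N c d
  proof -
    have "(\<Sum>k<N. norm ((y (d k) - z (d k)) - (y (c k) - z (c k))))
        \<le> (\<Sum>k<N. norm (y (d k) - y (c k))) + (\<Sum>k<N. norm (z (d k) - z (c k)))"
      unfolding sum.distrib[symmetric]
      by (rule sum_mono) (metis diff_diff_eq2 diff_add_eq norm_triangle_ineq4 add_diff_eq)
    also have "\<dots> < e / 2 + e / 2"
      using small1[OF ivl] small2[OF ivl] len by (intro add_strict_mono) auto
    finally show ?thesis by simp
  qed
  moreover have "min \<delta>1 \<delta>2 > 0"
    using \<open>\<delta>1 > 0\<close> \<open>\<delta>2 > 0\<close> by simp
  ultimately show "\<exists>\<delta>>0. \<forall>N c d. nonoverlapping_subintervals a b N c d \<longrightarrow>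
     (\<Sum>k<N. d k - c k) < \<delta> \<longrightarrow> (\<Sum>k<N. norm ((y (d k) - z (d k)) - (y (c k) - z (c k)))) < e"
    by blast
qed

lemma disjoint_open_intervals_separated:
  fixes c d c' d' :: real
  assumes "c < d" "c' < d'" "{c<..<d} \<inter> {c'<..<d'} = {}"
  shows "d \<le> c' \<or> d' \<le> c"
proof (rule ccontr)
  assume "\<not> ?thesis"
  then have "(max c c' + min d d') / 2 \<in> {c<..<d} \<inter> {c'<..<d'}"
    using assms(1,2) by auto
  with assms(3) show False by blast
qed

lemma pairwise_nonoverlapping_if_interiors_disjoint:
  assumes "pairwise (\<lambda>A B. interior A \<inter> interior B = {}) \<D>"
  shows "pairwise (\<lambda>(c, d) (c', d'). d \<le> c' \<or> d' \<le> c) {(c, d). c < d \<and> {c..d::real} \<in> \<D>}"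
proof (rule pairwiseI)
  fix i j assume i: "i \<in> {(c, d). c < d \<and> {c..d} \<in> \<D>}" and j: "j \<in> {(c, d). c < d \<and> {c..d} \<in> \<D>}"
    and ne: "i \<noteq> j"
  obtain c d c' d' where ij: "i = (c, d)" "j = (c', d')"
    by (cases i, cases j)
  have cd: "c < d" "{c..d} \<in> \<D>" "c' < d'" "{c'..d'} \<in> \<D>" "{c..d} \<noteq> {c'..d'}"
    using i j ij ne by auto
  then have "interior {c..d} \<inter> interior {c'..d'} = {}"
    using assms unfolding pairwise_def by blast
  with cd ij show "(\<lambda>(c, d) (c', d'). d \<le> c' \<or> d' \<le> c) i j"
    by (simp add: disjoint_open_intervals_separated)
qed

lemma sum_nonoverlapping_intervals_le_measure:
  fixes F :: "(real \<times> real) set"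
  assumes F: "finite F" "\<And>c d. (c, d) \<in> F \<Longrightarrow> c \<le> d" "pairwise (\<lambda>(c, d) (c', d'). d \<le> c' \<or> d' \<le> c) F"
    and S: "(\<Union>(c, d)\<in>F. {c..d}) \<subseteq> S" "S \<in> lmeasurable"
  shows "(\<Sum>(c, d)\<in>F. d - c) \<le> measure lebesgue S"
proof -
  have "pairwise (\<lambda>i j. negligible ((\<lambda>(c, d). {c..d}) i \<inter> (\<lambda>(c, d). {c..d}) j)) F"
  proof (rule pairwise_mono[OF F(3)], clarify)
    fix c d c' d' :: real
    assume "d \<le> c' \<or> d' \<le> c"
    then have "{c..d} \<inter> {c'..d'} \<subseteq> {d, c}"
      by auto
    then show "negligible ({c..d} \<inter> {c'..d'})"
      by (rule negligible_subset[rotated]) simp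
  qed simp
  then have "measure lebesgue (\<Union>(c, d)\<in>F. {c..d}) = (\<Sum>i\<in>F. measure lebesgue ((\<lambda>(c, d). {c..d}) i))"
    by (intro measure_negligible_finite_Union_image[OF F(1)]) auto
  also have "\<dots> = (\<Sum>(c, d)\<in>F. d - c)"
    using F(2) by (intro sum.cong) auto
  finally have "(\<Sum>(c, d)\<in>F. d - c) = measure lebesgue (\<Union>(c, d)\<in>F. {c..d})" ..
  also have "\<dots> \<le> measure lebesgue S"
    using S F(1) by (intro measure_mono_fmeasurable sets.finite_UN) auto
  finally show ?thesis .
qed

lemma negligible_nonoverlapping_interval_cover:
  fixes N :: "real set"
  assumes N: "negligible N" "N \<subseteq> {a..b}" and ab: "a < b" and \<delta>: "\<delta> > 0"
  obtains I :: "(real \<times> real) set" where "countable I"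
    "\<And>c d. (c, d) \<in> I \<Longrightarrow> a \<le> c \<and> c < d \<and> d \<le> b"
    "pairwise (\<lambda>(c, d) (c', d'). d \<le> c' \<or> d' \<le> c) I"
    "N \<subseteq> (\<Union>(c, d)\<in>I. {c..d})"
    "\<And>F. F \<subseteq> I \<Longrightarrow> finite F \<Longrightarrow> (\<Sum>(c, d)\<in>F. d - c) < \<delta>"
proof -
  have "N \<in> lmeasurable" "N \<subseteq> cbox a b"
    using N negligible_imp_measurable by (auto simp: cbox_interval)
  then obtain \<D> where \<D>: "countable \<D>" "\<And>K. K \<in> \<D> \<Longrightarrow> K \<subseteq> cbox a b \<and> K \<noteq> {} \<and> (\<exists>c d. K = cbox c d)"
      "pairwise (\<lambda>A B. interior A \<inter> interior B = {}) \<D>"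
      "\<And>K. \<lbrakk>K \<in> \<D>; box a b \<noteq> {}\<rbrakk> \<Longrightarrow> interior K \<noteq> {}"
      "N \<subseteq> \<Union>\<D>" "\<Union>\<D> \<in> lmeasurable" "measure lebesgue (\<Union>\<D>) \<le> measure lebesgue N + \<delta> / 2"
    using measurable_outer_intervals_bounded[of N a b "\<delta> / 2"] half_gt_zero[OF \<delta>] by metis
  have \<D>_ivl: "\<exists>c d. c < d \<and> K = {c..d}" if K: "K \<in> \<D>" for K
  proof -
    obtain c d where "K = {c..d}"
      using \<D>(2)[OF K] by (auto simp: cbox_interval)
    moreover have "interior K \<noteq> {}"
      using \<D>(4)[OF K] ab by simp
    ultimately show ?thesis
      by (metis greaterThanLessThan_empty_iff interior_atLeastAtMost_real not_less)
  qed
  define I where "I = {(c, d). c < d \<and> {c..d} \<in> \<D>}"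
  have pw: "pairwise (\<lambda>(c, d) (c', d'). d \<le> c' \<or> d' \<le> c) I"
    unfolding I_def by (rule pairwise_nonoverlapping_if_interiors_disjoint[OF \<D>(3)])
  have bounds: "a \<le> c \<and> c < d \<and> d \<le> b" if "(c, d) \<in> I" for c d
    using that \<D>(2) by (fastforce simp: I_def cbox_interval)
  have countable: "countable I"
  proof (rule countable_image_inj_on)
    show "inj_on (\<lambda>(c, d). {c..d::real}) I"
      by (rule inj_onI) (auto simp: I_def)
    show "countable ((\<lambda>(c, d). {c..d}) ` I)"
      using \<D>(1) by (rule countable_subset[rotated]) (auto simp: I_def)
  qed
  have cover: "N \<subseteq> (\<Union>(c, d)\<in>I. {c..d})"
  proof
    fix x assume "x \<in> N"
    then obtain K c d where "x \<in> K" "K \<in> \<D>" "c < d" "K = {c..d}"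
      using \<D>(5) \<D>_ivl by blast
    then show "x \<in> (\<Union>(c, d)\<in>I. {c..d})"
      by (intro UN_I[of "(c, d)"]) (auto simp: I_def)
  qed
  have "(\<Sum>(c, d)\<in>F. d - c) < \<delta>" if F: "F \<subseteq> I" "finite F" for F
  proof -
    have "(\<Sum>(c, d)\<in>F. d - c) \<le> measure lebesgue (\<Union>\<D>)"
      using F \<D>(6) pairwise_subset[OF pw F(1)]
      by (intro sum_nonoverlapping_intervals_le_measure) (auto simp: I_def)
    also have "\<dots> < \<delta>"
      using \<D>(7) \<delta> N(1) by (simp add: negligible_imp_measure0)
    finally show ?thesis .
  qed
  with countable bounds pw cover show thesis
    by (rule that)
qed

lemma measure_continuous_image_interval_le:
  fixes \<phi> :: "real \<Rightarrow> real"
  assumes cont: "continuous_on {c..d} \<phi>" and cd: "c \<le> d"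
  obtains p q where "p \<in> {c..d}" "q \<in> {c..d}" "measure lebesgue (\<phi> ` {c..d}) \<le> \<bar>\<phi> q - \<phi> p\<bar>"
proof -
  obtain p where p: "p \<in> {c..d}" "\<And>s. s \<in> {c..d} \<Longrightarrow> \<phi> p \<le> \<phi> s"
    using continuous_attains_inf[OF compact_Icc _ cont] cd by auto
  obtain q where q: "q \<in> {c..d}" "\<And>s. s \<in> {c..d} \<Longrightarrow> \<phi> s \<le> \<phi> q"
    using continuous_attains_sup[OF compact_Icc _ cont] cd by auto
  have "measure lebesgue (\<phi> ` {c..d}) \<le> measure lebesgue {\<phi> p..\<phi> q}"
    using p q compact_continuous_image[OF cont compact_Icc]
    by (intro measure_mono_fmeasurable) (auto intro: fmeasurableD lmeasurable_compact)
  also have "\<dots> = \<bar>\<phi> q - \<phi> p\<bar>"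
    using p(2)[OF q(1)] by simp
  finally show thesis
    using that p(1) q(1) by blast
qed

lemma abs_cont_on_sum_measure_image:
  fixes \<phi> :: "real \<Rightarrow> real"
  assumes ac: "abs_cont_on a b \<phi>" and e: "e > 0"
  shows "\<exists>\<delta>>0. \<forall>F. finite F \<longrightarrow> (\<forall>(c, d)\<in>F. a \<le> c \<and> c \<le> d \<and> d \<le> b) \<longrightarrow>
    pairwise (\<lambda>(c, d) (c', d'). d \<le> c' \<or> d' \<le> c) F \<longrightarrow> (\<Sum>(c, d)\<in>F. d - c) < \<delta> \<longrightarrow>
    (\<Sum>(c, d)\<in>F. measure lebesgue (\<phi> ` {c..d})) < e"
proof -
  have cont: "continuous_on {a..b} \<phi>"
    by (rule abs_cont_on_imp_continuous_on[OF ac])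
  obtain \<delta> where \<delta>: "\<delta> > 0" and small: "\<forall>(F :: (real \<times> real) set) c d. finite F \<longrightarrow>
      (\<forall>i\<in>F. a \<le> c i \<and> c i \<le> d i \<and> d i \<le> b) \<longrightarrow>
      (\<forall>i\<in>F. \<forall>j\<in>F. i \<noteq> j \<longrightarrow> d i \<le> c j \<or> d j \<le> c i) \<longrightarrow> (\<Sum>i\<in>F. d i - c i) < \<delta> \<longrightarrow>
      (\<Sum>i\<in>F. norm (\<phi> (d i) - \<phi> (c i))) < e"
    using abs_cont_on_finite_family[OF ac e] by blast
  have "(\<Sum>(c, d)\<in>F. measure lebesgue (\<phi> ` {c..d})) < e"
    if F: "finite F" "\<forall>(c, d)\<in>F. a \<le> c \<and> c \<le> d \<and> d \<le> b"
      "pairwise (\<lambda>(c, d) (c', d'). d \<le> c' \<or> d' \<le> c) F" "(\<Sum>(c, d)\<in>F. d - c) < \<delta>" for F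
  proof -
    have "\<exists>p q. p \<in> {fst i..snd i} \<and> q \<in> {fst i..snd i} \<and>
        measure lebesgue (\<phi> ` {fst i..snd i}) \<le> \<bar>\<phi> q - \<phi> p\<bar>" if i: "i \<in> F" for i
    proof -
      have "(\<lambda>(c, d). a \<le> c \<and> c \<le> d \<and> d \<le> b) i"
        using F(2) i by blast
      then have "a \<le> fst i" "fst i \<le> snd i" "snd i \<le> b"
        by (simp_all add: case_prod_beta)
      then have "continuous_on {fst i..snd i} \<phi>"
        by (intro continuous_on_subset[OF cont]) auto
      then show ?thesis
        using \<open>fst i \<le> snd i\<close> by (rule measure_continuous_image_interval_le) blast
    qed
    then obtain p q where pq: "\<And>i. i \<in> F \<Longrightarrow> p i \<in> {fst i..snd i} \<and> q i \<in> {fst i..snd i} \<and>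
        measure lebesgue (\<phi> ` {fst i..snd i}) \<le> \<bar>\<phi> (q i) - \<phi> (p i)\<bar>"
      by metis
    have "(\<Sum>(c, d)\<in>F. measure lebesgue (\<phi> ` {c..d})) \<le> (\<Sum>i\<in>F. norm (\<phi> (max (p i) (q i)) - \<phi> (min (p i) (q i))))"
      using pq by (intro sum_mono) (auto simp: case_prod_beta max_def min_def abs_minus_commute)
    also have "\<dots> < e"
    proof (rule small[rule_format (no_asm), OF F(1)])
      show "\<forall>i\<in>F. a \<le> min (p i) (q i) \<and> min (p i) (q i) \<le> max (p i) (q i) \<and> max (p i) (q i) \<le> b"
        using pq F(2) by fastforce
      show "\<forall>i\<in>F. \<forall>j\<in>F. i \<noteq> j \<longrightarrow> max (p i) (q i) \<le> min (p j) (q j) \<or> max (p j) (q j) \<le> min (p i) (q i)"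
      proof (intro ballI impI)
        fix i j assume ij: "i \<in> F" "j \<in> F" "i \<noteq> j"
        then have "snd i \<le> fst j \<or> snd j \<le> fst i"
          using F(3) unfolding pairwise_def by (auto simp: case_prod_beta)
        then show "max (p i) (q i) \<le> min (p j) (q j) \<or> max (p j) (q j) \<le> min (p i) (q i)"
          using pq[OF ij(1)] pq[OF ij(2)] by auto
      qed
      have "(\<Sum>i\<in>F. max (p i) (q i) - min (p i) (q i)) \<le> (\<Sum>i\<in>F. snd i - fst i)"
      proof (rule sum_mono)
        fix i assume "i \<in> F"
        then show "max (p i) (q i) - min (p i) (q i) \<le> snd i - fst i"
          using pq[of i] by auto
      qed
      also have "\<dots> = (\<Sum>(c, d)\<in>F. d - c)"
        by (simp add: case_prod_beta)
      finally show "(\<Sum>i\<in>F. max (p i) (q i) - min (p i) (q i)) < \<delta>"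
        using F(4) by linarith
    qed
    finally show ?thesis .
  qed
  with \<delta> show ?thesis
    by blast
qed

lemma abs_cont_on_negligible_image:
  fixes \<phi> :: "real \<Rightarrow> real"
  assumes ac: "abs_cont_on a b \<phi>" and N: "negligible N" "N \<subseteq> {a..b}"
  shows "negligible (\<phi> ` N)"
proof (cases "a < b")
  case False
  then have "N \<subseteq> {a}"
    using N(2) by auto
  then show ?thesis
    by (intro negligible_finite) (auto intro: finite_subset)
next
  case ab: True
  show ?thesis
    unfolding negligible_outer_le
  proof (intro allI impI)
    fix e :: real assume e: "e > 0"
    obtain \<delta> where \<delta>: "\<delta> > 0" and small: "\<forall>F. finite F \<longrightarrow> (\<forall>(c, d)\<in>F. a \<le> c \<and> c \<le> d \<and> d \<le> b) \<longrightarrow>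
        pairwise (\<lambda>(c, d) (c', d'). d \<le> c' \<or> d' \<le> c) F \<longrightarrow> (\<Sum>(c, d)\<in>F. d - c) < \<delta> \<longrightarrow>
        (\<Sum>(c, d)\<in>F. measure lebesgue (\<phi> ` {c..d})) < e"
      using abs_cont_on_sum_measure_image[OF ac e] by blast
    obtain I where I: "countable I" "\<And>c d. (c, d) \<in> I \<Longrightarrow> a \<le> c \<and> c < d \<and> d \<le> b"
        "pairwise (\<lambda>(c, d) (c', d'). d \<le> c' \<or> d' \<le> c) I" "N \<subseteq> (\<Union>(c, d)\<in>I. {c..d})"
        "\<And>F. F \<subseteq> I \<Longrightarrow> finite F \<Longrightarrow> (\<Sum>(c, d)\<in>F. d - c) < \<delta>"
      using negligible_nonoverlapping_interval_cover[OF N ab \<delta>] by blast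
    let ?A = "\<lambda>(c, d). \<phi> ` {c..d}"
    have A: "?A i \<in> lmeasurable" if i: "i \<in> I" for i
    proof -
      obtain c d where cd: "i = (c, d)"
        by (cases i)
      with i I(2) have "{c..d} \<subseteq> {a..b}"
        by auto
      then have "compact (\<phi> ` {c..d})"
        by (intro compact_continuous_image continuous_on_subset[OF abs_cont_on_imp_continuous_on[OF ac]]) auto
      with cd show ?thesis
        by (simp add: lmeasurable_compact)
    qed
    have bound: "measure lebesgue (\<Union>i\<in>F. ?A i) \<le> e" if F: "F \<subseteq> I" "finite F" for F
    proof -
      have "measure lebesgue (\<Union>i\<in>F. ?A i) \<le> (\<Sum>i\<in>F. measure lebesgue (?A i))"
        using F A by (intro measure_UNION_le) auto
      also have "\<dots> = (\<Sum>(c, d)\<in>F. measure lebesgue (\<phi> ` {c..d}))"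
        by (rule sum.cong) auto
      also have "\<dots> < e"
      proof (rule small[rule_format (no_asm)])
        show "\<forall>(c, d)\<in>F. a \<le> c \<and> c \<le> d \<and> d \<le> b"
        proof clarify
          fix c d assume "(c, d) \<in> F"
          then show "a \<le> c \<and> c \<le> d \<and> d \<le> b"
            using F(1) I(2)[of c d] by auto
        qed
      qed (use F pairwise_subset[OF I(3) F(1)] I(5)[OF F] in auto)
      finally show ?thesis
        by simp
    qed
    have "(\<Union>i\<in>I. ?A i) \<in> lmeasurable" "measure lebesgue (\<Union>i\<in>I. ?A i) \<le> e"
      using fmeasurable_UN_bound[OF I(1), of ?A lebesgue e] measure_UN_bound[OF I(1), of ?A lebesgue e] A bound
      by auto
    moreover have "\<phi> ` N \<subseteq> (\<Union>i\<in>I. ?A i)"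
      using I(4) by fastforce
    ultimately show "\<exists>T. \<phi> ` N \<subseteq> T \<and> T \<in> lmeasurable \<and> measure lebesgue T \<le> e"
      by blast
  qed
qed

lemma continuous_on_last_crossing:
  fixes \<psi> :: "real \<Rightarrow> real"
  assumes ab: "a \<le> b" and cont: "continuous_on {a..b} \<psi>" and c: "\<psi> a < c" "c < \<psi> b"
  obtains s where "a < s" "s < b" "\<psi> s = c" "\<And>r. s < r \<Longrightarrow> r \<le> b \<Longrightarrow> c < \<psi> r"
proof -
  define S where "S = {s \<in> {a..b}. \<psi> s = c}"
  have "closed S"
    unfolding S_def by (rule continuous_closed_preimage_constant[OF cont]) simp
  moreover have "S \<noteq> {}"
    using IVT'[of \<psi> a c b, OF _ _ ab cont] c unfolding S_def by auto
  moreover have "bdd_above S"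
    unfolding S_def by (rule bdd_aboveI[of _ b]) auto
  ultimately have "Sup S \<in> S"
    by (rule closed_contains_Sup[rotated 2])
  then have s: "Sup S \<in> {a..b}" "\<psi> (Sup S) = c"
    unfolding S_def by auto
  show thesis
  proof (rule that[of "Sup S"])
    show "a < Sup S" "Sup S < b"
      using s c by (auto simp: less_le)
    show "\<psi> (Sup S) = c" by fact
    fix r assume r: "Sup S < r" "r \<le> b"
    show "c < \<psi> r"
    proof (rule ccontr)
      assume "\<not> c < \<psi> r"
      moreover have "continuous_on {r..b} \<psi>"
        using cont s r by (auto intro: continuous_on_subset)
      ultimately obtain x where x: "r \<le> x" "x \<le> b" "\<psi> x = c"
        using IVT'[of \<psi> r c b] r c by auto
      then have "x \<in> S"
        using s r unfolding S_def by auto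
      then have "x \<le> Sup S"
        by (rule cSup_upper) fact
      with x r show False by simp
    qed
  qed
qed

text \<open>At the last time the value c is crossed, the derivative cannot be negative, so
  every value between the endpoint values is taken on the exceptional set, which has a
  negligible image by Lusin's property.\<close>
lemma abs_cont_on_le_if_deriv_neg:
  fixes \<psi> :: "real \<Rightarrow> real"
  assumes ac: "abs_cont_on a b \<psi>" and ab: "a \<le> b" and N: "negligible N"
    and der: "\<And>s. s \<in> {a<..<b} - N \<Longrightarrow> \<exists>D<0. (\<psi> has_real_derivative D) (at s)"
  shows "\<psi> b \<le> \<psi> a"
proof (rule ccontr)
  assume "\<not> \<psi> b \<le> \<psi> a"
  then have lt: "\<psi> a < \<psi> b" by simp
  have "{\<psi> a<..<\<psi> b} \<subseteq> \<psi> ` (N \<inter> {a..b})"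
  proof
    fix c assume c: "c \<in> {\<psi> a<..<\<psi> b}"
    obtain s where s: "a < s" "s < b" "\<psi> s = c" and above: "\<And>r. s < r \<Longrightarrow> r \<le> b \<Longrightarrow> c < \<psi> r"
      using continuous_on_last_crossing[OF ab abs_cont_on_imp_continuous_on[OF ac]] c by auto
    have "s \<in> N"
    proof (rule ccontr)
      assume "s \<notin> N"
      then obtain D where "(\<psi> has_real_derivative D) (at s)" "D < 0"
        using der s by auto
      then obtain d where d: "d > 0" "\<And>h. h > 0 \<Longrightarrow> h < d \<Longrightarrow> \<psi> (s + h) < \<psi> s"
        using DERIV_neg_dec_right by blast
      define h where "h = min (d / 2) (b - s)"
      have "h > 0" "h < d" "s + h \<le> b"
        using d s unfolding h_def by auto
      then show False
        using d(2)[of h] above[of "s + h"] s by simp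
    qed
    with s show "c \<in> \<psi> ` (N \<inter> {a..b})"
      by auto
  qed
  moreover have "negligible (\<psi> ` (N \<inter> {a..b}))"
    using ac by (rule abs_cont_on_negligible_image) (auto intro: negligible_Int N)
  ultimately have "negligible {\<psi> a<..<\<psi> b}"
    by (rule negligible_subset[rotated])
  with lt show False
    using negligible_interval(2)[of "\<psi> a" "\<psi> b"] by simp
qed

lemma abs_cont_on_increment_le:
  fixes \<phi> :: "real \<Rightarrow> real"
  assumes ac: "abs_cont_on a b \<phi>" and ab: "a \<le> b"
    and der: "AE s in lebesgue. s \<in> {a<..<b} \<longrightarrow> (\<exists>D. (\<phi> has_real_derivative D) (at s) \<and> D \<le> K)"
  shows "\<phi> b - \<phi> a \<le> K * (b - a)"
proof -
  obtain N where N: "negligible N"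
    and good: "\<And>s. s \<in> {a<..<b} - N \<Longrightarrow> \<exists>D. (\<phi> has_real_derivative D) (at s) \<and> D \<le> K"
  proof -
    obtain N where "{s \<in> space lebesgue. \<not> (s \<in> {a<..<b} \<longrightarrow> (\<exists>D. (\<phi> has_real_derivative D) (at s) \<and> D \<le> K))} \<subseteq> N"
      "emeasure lebesgue N = 0" "N \<in> sets lebesgue"
      using AE_E[OF der] by blast
    then show thesis
      by (intro that[of N]) (auto simp: negligible_iff_null_sets null_sets_def)
  qed
  have slack: "\<phi> b - \<phi> a \<le> (K + \<eta>) * (b - a)" if \<eta>: "\<eta> > 0" for \<eta>
  proof -
    have "(\<lambda>s. \<phi> s - (K + \<eta>) * s) b \<le> (\<lambda>s. \<phi> s - (K + \<eta>) * s) a"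
    proof (rule abs_cont_on_le_if_deriv_neg[OF _ ab N])
      show "abs_cont_on a b (\<lambda>s. \<phi> s - (K + \<eta>) * s)"
        by (intro abs_cont_on_diff ac abs_cont_on_lipschitz[where M="\<bar>K + \<eta>\<bar>"])
          (simp add: right_diff_distrib[symmetric] abs_mult)
      fix s assume "s \<in> {a<..<b} - N"
      then obtain D where "(\<phi> has_real_derivative D) (at s)" "D \<le> K"
        using good by blast
      then show "\<exists>D<0. ((\<lambda>s. \<phi> s - (K + \<eta>) * s) has_real_derivative D) (at s)"
        using \<eta> by (intro exI[of _ "D - (K + \<eta>)"]) (auto intro!: derivative_eq_intros)
    qed
    then show ?thesis
      by (simp add: algebra_simps)
  qed
  have "\<phi> b - \<phi> a \<le> K * (b - a) + e" if e: "e > 0" for e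
  proof (cases "a = b")
    case False
    then have "b - a > 0"
      using ab by simp
    then show ?thesis
      using slack[of "e / (b - a)"] e by (simp add: distrib_right)
  qed (use e in simp)
  then show ?thesis
    by (rule field_le_epsilon)
qed

lemma abs_cont_on_abs_increment_le:
  fixes \<phi> :: "real \<Rightarrow> real"
  assumes ac: "abs_cont_on a b \<phi>" and ab: "a \<le> b"
    and der: "AE s in lebesgue. s \<in> {a<..<b} \<longrightarrow> (\<exists>D. (\<phi> has_real_derivative D) (at s) \<and> \<bar>D\<bar> \<le> K)"
  shows "\<bar>\<phi> b - \<phi> a\<bar> \<le> K * (b - a)"
proof -
  have "\<phi> b - \<phi> a \<le> K * (b - a)"
    by (rule abs_cont_on_increment_le[OF ac ab]) (rule eventually_mono[OF der], auto)
  moreover have "(- \<phi> b) - (- \<phi> a) \<le> K * (b - a)"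
  proof (rule abs_cont_on_increment_le[OF _ ab])
    show "abs_cont_on a b (\<lambda>s. - \<phi> s)"
      by (rule abs_cont_on_dominated[OF ac, where K=1]) (simp add: abs_minus_commute)
    show "AE s in lebesgue. s \<in> {a<..<b} \<longrightarrow> (\<exists>D. ((\<lambda>s. - \<phi> s) has_real_derivative D) (at s) \<and> D \<le> K)"
      by (rule eventually_mono[OF der]) (auto intro: DERIV_minus)
  qed
  ultimately show ?thesis
    by linarith
qed

lemma ln_diff_le_diff_div:
  fixes x y e :: real
  assumes "e > 0" "x \<ge> e" "y \<ge> e"
  shows "\<bar>ln x - ln y\<bar> \<le> \<bar>x - y\<bar> / e"
proof -
  have "ln u - ln v \<le> \<bar>u - v\<bar> / e" if "u \<ge> e" "v \<ge> e" for u v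
  proof -
    have "ln u - ln v = ln (u / v)"
      using that assms(1) by (simp add: ln_div)
    also have "\<dots> \<le> u / v - 1"
      using that assms(1) by (intro ln_le_minus_one) simp
    also have "\<dots> = (u - v) / v"
      using that assms(1) by (simp add: field_simps)
    also have "\<dots> \<le> \<bar>u - v\<bar> / e"
      using that assms(1) by (intro frac_le) auto
    finally show ?thesis .
  qed
  from this[of x y] this[of y x] assms show ?thesis
    by (simp add: abs_le_iff abs_minus_commute)
qed

lemma DERIV_ln_add_inner_self:
  fixes z :: "real \<Rightarrow> 'a::real_inner"
  assumes d: "(z has_vector_derivative z') (at s)" and e: "e > 0"
  shows "((\<lambda>s. ln (e + z s \<bullet> z s)) has_real_derivative 2 * (z s \<bullet> z') / (e + z s \<bullet> z s)) (at s)"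
proof -
  have d': "(z has_derivative (\<lambda>h. h *\<^sub>R z')) (at s)"
    using d by (simp add: has_vector_derivative_def)
  have "((\<lambda>s. z s \<bullet> z s) has_derivative (\<lambda>h. z s \<bullet> (h *\<^sub>R z') + (h *\<^sub>R z') \<bullet> z s)) (at s)"
    by (rule has_derivative_inner[OF d' d'])
  moreover have "(\<lambda>h. z s \<bullet> (h *\<^sub>R z') + (h *\<^sub>R z') \<bullet> z s) = (*) (2 * (z s \<bullet> z'))"
    by (auto simp: fun_eq_iff inner_commute algebra_simps)
  ultimately have "((\<lambda>s. z s \<bullet> z s) has_real_derivative 2 * (z s \<bullet> z')) (at s)"
    by (simp add: has_field_derivative_def)
  then have g: "((\<lambda>s. e + z s \<bullet> z s) has_real_derivative 2 * (z s \<bullet> z')) (at s)"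
    using DERIV_add[OF DERIV_const[of e]] by simp
  have "e + z s \<bullet> z s > 0"
    using e by (simp add: add_pos_nonneg)
  from DERIV_chain2[OF DERIV_ln_divide[OF this] g] show ?thesis
    by simp
qed

lemma abs_cont_on_ln_add_inner_self:
  fixes z :: "real \<Rightarrow> 'a::real_inner"
  assumes ac: "abs_cont_on a b z" and e: "e > 0"
  shows "abs_cont_on a b (\<lambda>s. ln (e + z s \<bullet> z s))"
proof -
  obtain R where R: "\<And>s. s \<in> {a..b} \<Longrightarrow> norm (z s) \<le> R"
    using compact_continuous_image[OF abs_cont_on_imp_continuous_on[OF ac] compact_Icc]
    by (meson compact_imp_bounded bounded_iff imageI)
  show ?thesis
  proof (rule abs_cont_on_dominated[OF ac, where K="2 * R / e"])
    fix s r assume s: "s \<in> {a..b}" and r: "r \<in> {a..b}"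
    have "norm (ln (e + z s \<bullet> z s) - ln (e + z r \<bullet> z r)) \<le> \<bar>(e + z s \<bullet> z s) - (e + z r \<bullet> z r)\<bar> / e"
      unfolding real_norm_def by (rule ln_diff_le_diff_div[OF e]) auto
    also have "(e + z s \<bullet> z s) - (e + z r \<bullet> z r) = (z s - z r) \<bullet> (z s + z r)"
      by (simp add: algebra_simps inner_commute)
    also have "\<bar>(z s - z r) \<bullet> (z s + z r)\<bar> \<le> norm (z s - z r) * (2 * R)"
      using Cauchy_Schwarz_ineq2[of "z s - z r" "z s + z r"] norm_triangle_ineq[of "z s" "z r"] R[OF s] R[OF r]
      by (smt (verit) mult_left_mono norm_ge_zero)
    finally show "norm (ln (e + z s \<bullet> z s) - ln (e + z r \<bullet> z r)) \<le> 2 * R / e * norm (z s - z r)"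
      using e by (simp add: divide_right_mono field_simps)
  qed
qed

text \<open>Gronwall's inequality in logarithmic form: the derivative bound says that
  ln (e + z \<bullet> z) is K-Lipschitz, the constant e > 0 keeping the logarithm finite.\<close>
lemma abs_cont_on_inner_self_growth:
  fixes z :: "real \<Rightarrow> 'a::real_inner"
  assumes ac: "abs_cont_on a b z" and e: "e > 0"
    and der: "AE s in lebesgue. s \<in> {a<..<b} \<longrightarrow>
      (\<exists>z'. (z has_vector_derivative z') (at s) \<and> \<bar>2 * (z s \<bullet> z')\<bar> \<le> K * (e + z s \<bullet> z s))"
    and p: "p \<in> {a..b}" and q: "q \<in> {a..b}"
  shows "e + z q \<bullet> z q \<le> exp (K * \<bar>q - p\<bar>) * (e + z p \<bullet> z p)"
proof -
  define H where "H w = ln (e + w \<bullet> w)" for w :: 'a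
  define l where "l = min p q"
  define r where "r = max p q"
  have lr: "a \<le> l" "l \<le> r" "r \<le> b" "r - l = \<bar>q - p\<bar>"
    using p q by (auto simp: l_def r_def)
  have "\<bar>H (z r) - H (z l)\<bar> \<le> K * (r - l)"
  proof (rule abs_cont_on_abs_increment_le[OF abs_cont_on_subinterval lr(2)])
    show "abs_cont_on a b (\<lambda>s. H (z s))"
      unfolding H_def by (rule abs_cont_on_ln_add_inner_self[OF ac e])
    show "AE s in lebesgue. s \<in> {l<..<r} \<longrightarrow> (\<exists>D. ((\<lambda>s. H (z s)) has_real_derivative D) (at s) \<and> \<bar>D\<bar> \<le> K)"
    proof (rule eventually_mono[OF der], intro impI)
      fix s assume "s \<in> {a<..<b} \<longrightarrow> (\<exists>z'. (z has_vector_derivative z') (at s) \<and> \<bar>2 * (z s \<bullet> z')\<bar> \<le> K * (e + z s \<bullet> z s))"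
        and "s \<in> {l<..<r}"
      then obtain z' where z': "(z has_vector_derivative z') (at s)" "\<bar>2 * (z s \<bullet> z')\<bar> \<le> K * (e + z s \<bullet> z s)"
        using lr by auto
      have "e + z s \<bullet> z s > 0"
        using e by (simp add: add_pos_nonneg)
      then have "\<bar>2 * (z s \<bullet> z') / (e + z s \<bullet> z s)\<bar> \<le> K"
        using z'(2) by (simp add: abs_div pos_divide_le_eq)
      then show "\<exists>D. ((\<lambda>s. H (z s)) has_real_derivative D) (at s) \<and> \<bar>D\<bar> \<le> K"
        using DERIV_ln_add_inner_self[OF z'(1) e] unfolding H_def by blast
    qed
  qed (use lr in auto)
  then have "H (z q) \<le> H (z p) + K * \<bar>q - p\<bar>"
    using lr by (cases "p \<le> q") (auto simp: l_def r_def)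
  then have "exp (H (z q)) \<le> exp (H (z p) + K * \<bar>q - p\<bar>)"
    by simp
  moreover have "e + w \<bullet> w > 0" for w :: 'a
    using e by (simp add: add_pos_nonneg)
  ultimately show ?thesis
    unfolding H_def by (simp add: exp_add mult.commute)
qed

lemma abs_two_inner_le:
  fixes w w' :: "'a::real_inner"
  assumes w': "norm w' \<le> A + B * norm w" and AB: "A \<ge> 0" "B \<ge> 0"
  shows "\<bar>2 * (w \<bullet> w')\<bar> \<le> A * (1 + w \<bullet> w) + 2 * B * (w \<bullet> w)"
proof -
  have "\<bar>2 * (w \<bullet> w')\<bar> \<le> 2 * (norm w * norm w')"
    using Cauchy_Schwarz_ineq2[of w w'] by simp
  also have "\<dots> \<le> 2 * (norm w * (A + B * norm w))"
    using w' by (intro mult_left_mono) auto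
  also have "\<dots> = A * (2 * norm w) + 2 * B * (norm w)\<^sup>2"
    by (simp add: algebra_simps power2_eq_square)
  also have "\<dots> \<le> A * (1 + (norm w)\<^sup>2) + 2 * B * (norm w)\<^sup>2"
    using AB sum_squares_bound[of 1 "norm w"] by (intro add_mono mult_left_mono) (auto simp: power2_eq_square)
  finally show ?thesis
    by (simp add: power2_norm_eq_inner)
qed

section \<open>Indefinite integrals of bounded measurable functions\<close>

lemma norm_indefinite_integral_diff:
  fixes h :: "real \<Rightarrow> 'a::euclidean_space"
  assumes h: "h integrable_on {a..b}" and x: "x \<in> {a..b}" and y: "y \<in> {a..b}"
  shows "norm (integral {a..y} h - integral {a..x} h) = norm (integral {min x y..max x y} h)"
proof -
  have combine: "integral {a..v} h - integral {a..u} h = integral {u..v} h"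
    if "u \<le> v" "u \<in> {a..b}" "v \<in> {a..b}" for u v
  proof -
    have "integral {a..u} h + integral {u..v} h = integral {a..v} h"
      using that integrable_on_subinterval[OF h]
      by (intro Henstock_Kurzweil_Integration.integral_combine) auto
    then show ?thesis
      by (simp add: algebra_simps)
  qed
  show ?thesis
    using combine[OF _ x y] combine[OF _ y x]
    by (cases "x \<le> y") (auto simp: min_def max_def norm_minus_commute)
qed

lemma abs_cont_on_indefinite_integral:
  fixes h :: "real \<Rightarrow> 'a::euclidean_space"
  assumes h: "h integrable_on {a..b}" and B: "\<And>s. s \<in> {a..b} \<Longrightarrow> norm (h s) \<le> B"
  shows "abs_cont_on a b (\<lambda>s. integral {a..s} h)"
proof (rule abs_cont_on_lipschitz)
  fix s r assume s: "s \<in> {a..b}" and r: "r \<in> {a..b}"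
  have sub: "{min r s..max r s} \<subseteq> {a..b}"
    using s r by auto
  have "norm (integral {a..s} h - integral {a..r} h) = norm (integral {min r s..max r s} h)"
    by (rule norm_indefinite_integral_diff[OF h r s])
  also have "\<dots> \<le> integral {min r s..max r s} (\<lambda>_. B)"
    by (rule integral_norm_bound_integral[OF integrable_on_subinterval[OF h sub] integrable_const_ivl])
      (use B sub in blast)
  also have "\<dots> = B * \<bar>s - r\<bar>"
    by (simp add: min_def max_def)
  finally show "norm (integral {a..s} h - integral {a..r} h) \<le> B * \<bar>s - r\<bar>" .
qed

lemma norm_integral_le_except_on:
  fixes h :: "real \<Rightarrow> 'a::euclidean_space"
  assumes h: "h integrable_on {p..q}" and pq: "p \<le> q" and C: "C \<in> lmeasurable" and cB: "c \<ge> 0" "B \<ge> 0"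
    and bound: "\<And>s. s \<in> {p..q} \<Longrightarrow> norm (h s) \<le> c + B * indicator C s"
  shows "norm (integral {p..q} h) \<le> c * (q - p) + B * measure lebesgue (C \<inter> {p..q})"
proof -
  have ind: "indicat_real C integrable_on {p..q}"
    using C by (simp add: integrable_on_indicator fmeasurable_Int_fmeasurable)
  have "norm (integral {p..q} h) \<le> integral {p..q} (\<lambda>s. c + B * indicator C s)"
    using ind by (intro integral_norm_bound_integral[OF h] integrable_add integrable_on_mult_right bound) auto
  also have "\<dots> = integral {p..q} (\<lambda>s. c) + integral {p..q} (\<lambda>s. B * indicator C s)"
    using ind by (intro integral_add integrable_on_mult_right) auto
  also have "\<dots> = c * (q - p) + B * measure lebesgue (C \<inter> {p..q})"
    using pq C by (simp add: integral_mult_right integral_indicator fmeasurable_Int_fmeasurable)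
  finally show ?thesis .
qed

lemma measure_disjoint_cballs_le:
  fixes A G :: "real set" and F :: "(real \<times> real) set"
  assumes F: "finite F" "pairwise (\<lambda>i j. disjnt (cball (fst i) (snd i)) (cball (fst j) (snd j))) F"
    and A: "A \<in> sets lebesgue" and GA: "G - A \<in> lmeasurable" and \<epsilon>: "\<epsilon> > 0"
    and balls: "\<And>i. i \<in> F \<Longrightarrow> 0 < snd i \<and> cball (fst i) (snd i) \<subseteq> G \<and>
      \<epsilon> * snd i < measure lebesgue (cball (fst i) (snd i) - A)"
  shows "measure lebesgue (\<Union>i\<in>F. cball (fst i) (snd i)) \<le> (2 / \<epsilon>) * measure lebesgue (G - A)"
proof -
  define B where "B i = cball (fst i) (snd i)" for i :: "real \<times> real"
  have Bm: "B i \<in> lmeasurable" and BA: "B i - A \<in> lmeasurable" for i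
    using A unfolding B_def by (auto intro: fmeasurable_Diff)
  have disj: "B i \<inter> B j = {}" "(B i - A) \<inter> (B j - A) = {}" if "i \<in> F" "j \<in> F" "i \<noteq> j" for i j
    using F(2) that unfolding pairwise_def disjnt_def B_def by blast+
  have "measure lebesgue (\<Union>i\<in>F. B i) = (\<Sum>i\<in>F. measure lebesgue (B i))"
    by (rule measure_negligible_finite_Union_image[OF F(1)]) (simp_all add: Bm pairwise_def disj)
  also have "\<dots> \<le> (\<Sum>i\<in>F. (2 / \<epsilon>) * measure lebesgue (B i - A))"
  proof (rule sum_mono)
    fix i assume "i \<in> F"
    then show "measure lebesgue (B i) \<le> (2 / \<epsilon>) * measure lebesgue (B i - A)"
      using balls[of i] \<epsilon> by (simp add: B_def cball_eq_atLeastAtMost field_simps)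
  qed
  also have "\<dots> = (2 / \<epsilon>) * measure lebesgue (\<Union>i\<in>F. B i - A)"
    by (subst measure_negligible_finite_Union_image[OF F(1) BA])
      (simp_all add: sum_distrib_left pairwise_def disj)
  also have "\<dots> \<le> (2 / \<epsilon>) * measure lebesgue (G - A)"
  proof (intro mult_left_mono measure_mono_fmeasurable GA)
    show "(\<Union>i\<in>F. B i - A) \<subseteq> G - A"
      using balls by (auto simp: B_def)
    show "(\<Union>i\<in>F. B i - A) \<in> sets lebesgue"
      using BA F(1) by (intro sets.finite_UN) (auto intro: fmeasurableD)
  qed (use \<epsilon> in auto)
  finally show ?thesis
    by (simp add: B_def)
qed

text \<open>By Vitali's covering theorem these points are covered, up to a null set, by disjoint
  balls inside an open set G containing A with G - A small, and each of these balls has a fixed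
  fraction of its measure in G - A.\<close>
lemma negligible_sparse_points:
  fixes A :: "real set"
  assumes A: "A \<in> sets lebesgue" and \<epsilon>: "\<epsilon> > 0"
  shows "negligible {x\<in>A. \<forall>\<delta>>0. \<exists>d. 0 < d \<and> d < \<delta> \<and> \<epsilon> * d < measure lebesgue (cball x d - A)}"
    (is "negligible ?S")
  unfolding negligible_outer_le
proof (intro allI impI)
  fix e :: real assume e: "e > 0"
  obtain G where G: "open G" "A \<subseteq> G" "G - A \<in> lmeasurable" "emeasure lebesgue (G - A) < ennreal (\<epsilon> * e / 4)"
    using sets_lebesgue_outer_open[OF A, of "\<epsilon> * e / 4"] e \<epsilon> by auto
  have GA: "measure lebesgue (G - A) < \<epsilon> * e / 4"
    using G(3,4) e \<epsilon> by (simp add: emeasure_eq_measure2 ennreal_less_iff)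
  define K where "K = {(x, d). x \<in> ?S \<and> 0 < d \<and> cball x d \<subseteq> G \<and> \<epsilon> * d < measure lebesgue (cball x d - A)}"
  have K_ball: "0 < snd i \<and> cball (fst i) (snd i) \<subseteq> G \<and> \<epsilon> * snd i < measure lebesgue (cball (fst i) (snd i) - A)"
    if "i \<in> K" for i
    using that unfolding K_def by (cases i) auto
  have small_ball: "\<exists>i. i \<in> K \<and> x \<in> cball (fst i) (snd i) \<and> snd i < d" if x: "x \<in> ?S" and d: "0 < d" for x d
  proof -
    obtain \<rho> where \<rho>: "\<rho> > 0" "cball x \<rho> \<subseteq> G"
      using G(1,2) x open_contains_cball by blast
    have "\<forall>\<delta>>0. \<exists>d. 0 < d \<and> d < \<delta> \<and> \<epsilon> * d < measure lebesgue (cball x d - A)"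
      using x by blast
    then obtain d' where d': "0 < d'" "d' < min d \<rho>" "\<epsilon> * d' < measure lebesgue (cball x d' - A)"
      using d \<rho> by (meson min_less_iff_conj)
    then have "(x, d') \<in> K"
      using x \<rho> subset_cball[of d' \<rho> x] unfolding K_def by auto
    with d' show ?thesis
      by (intro exI[of _ "(x, d')"]) auto
  qed
  obtain C where C: "countable C" "C \<subseteq> K"
    and disj: "pairwise (\<lambda>i j. disjnt (cball (fst i) (snd i)) (cball (fst j) (snd j))) C"
    and covers: "negligible (?S - (\<Union>i\<in>C. cball (fst i) (snd i)))"
    by (rule Vitali_covering_theorem_cballs[of K snd ?S fst, OF conjunct1[OF K_ball] small_ball]) blast+
  have bound: "measure lebesgue (\<Union>i\<in>F. cball (fst i) (snd i)) \<le> e / 2" if F: "F \<subseteq> C" "finite F" for F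
  proof -
    have "measure lebesgue (\<Union>i\<in>F. cball (fst i) (snd i)) \<le> (2 / \<epsilon>) * measure lebesgue (G - A)"
      using F(1) C(2) K_ball by (intro measure_disjoint_cballs_le[OF F(2) pairwise_subset[OF disj F(1)] A G(3) \<epsilon>])
        blast
    also have "\<dots> \<le> (2 / \<epsilon>) * (\<epsilon> * e / 4)"
      using GA \<epsilon> by (intro mult_left_mono) auto
    finally show ?thesis
      using \<epsilon> by simp
  qed
  have U: "(\<Union>i\<in>C. cball (fst i) (snd i)) \<in> lmeasurable" "measure lebesgue (\<Union>i\<in>C. cball (fst i) (snd i)) \<le> e / 2"
    using fmeasurable_UN_bound[OF C(1) _ bound] measure_UN_bound[OF C(1) _ bound] by auto
  let ?U = "\<Union>i\<in>C. cball (fst i) (snd i)"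
  have N: "?S - ?U \<in> lmeasurable" "measure lebesgue (?S - ?U) = 0"
    using covers by (auto intro: negligible_imp_measurable negligible_imp_measure0)
  have "(?S - ?U) \<union> ?U \<in> lmeasurable"
    by (rule fmeasurable.Un[OF N(1) U(1)])
  moreover have "measure lebesgue ((?S - ?U) \<union> ?U) \<le> measure lebesgue (?S - ?U) + measure lebesgue ?U"
    using N(1) U(1) by (intro measure_Un_le) (auto intro: fmeasurableD)
  then have "measure lebesgue ((?S - ?U) \<union> ?U) \<le> e"
    using N(2) U(2) e by linarith
  moreover have "?S \<subseteq> (?S - ?U) \<union> ?U"
    by blast
  ultimately show "\<exists>T. ?S \<subseteq> T \<and> T \<in> lmeasurable \<and> measure lebesgue T \<le> e"
    by blast
qed

lemma norm_indefinite_integral_increment_le: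
  fixes h :: "real \<Rightarrow> 'a::euclidean_space"
  assumes h: "h integrable_on {a..b}" and x: "x \<in> {a..b}" and y: "y \<in> {a..b}"
    and hb: "\<And>s. s \<in> {a..b} \<Longrightarrow> norm (h s) \<le> M" and \<eta>: "\<eta> \<ge> 0"
    and A: "A \<in> sets lebesgue" "\<And>s. s \<in> A \<Longrightarrow> norm (h s - h x) \<le> \<eta>"
    and sparse: "y \<noteq> x \<Longrightarrow> measure lebesgue (cball x \<bar>y - x\<bar> - A) \<le> \<eta> * \<bar>y - x\<bar>"
  shows "norm (integral {a..y} h - integral {a..x} h - (y - x) *\<^sub>R h x) \<le> \<eta> * (1 + 2 * M) * \<bar>y - x\<bar>"
proof -
  define r where "r = \<bar>y - x\<bar>"
  define C where "C = cball x r - A"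
  let ?I = "{min x y..max x y}"
  have I: "?I \<subseteq> cball x r" "?I \<subseteq> {a..b}" "min x y \<le> max x y" "max x y - min x y = r"
    using x y by (auto simp: r_def dist_real_def min_def max_def)
  have M: "2 * M \<ge> 0"
    using hb[OF x] by (auto intro: order_trans[OF norm_ge_zero])
  have C: "C \<in> lmeasurable"
    unfolding C_def using A(1) by (intro fmeasurable_Diff) auto
  have shift: "integral {a..v} (\<lambda>s. h s - h x) = integral {a..v} h - (v - a) *\<^sub>R h x" if "v \<in> {a..b}" for v
  proof -
    have "h integrable_on {a..v}"
      using that by (intro integrable_on_subinterval[OF h]) auto
    then show ?thesis
      using that by (subst integral_diff) (auto simp: integral_const_real)
  qed
  have "integral {a..y} h - integral {a..x} h - (y - x) *\<^sub>R h x
      = integral {a..y} (\<lambda>s. h s - h x) - integral {a..x} (\<lambda>s. h s - h x)"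
    using x y by (simp add: shift algebra_simps)
  then have "norm (integral {a..y} h - integral {a..x} h - (y - x) *\<^sub>R h x) = norm (integral ?I (\<lambda>s. h s - h x))"
    using norm_indefinite_integral_diff[OF integrable_diff[OF h integrable_const_ivl] x y] by simp
  also have "\<dots> \<le> \<eta> * (max x y - min x y) + 2 * M * measure lebesgue (C \<inter> ?I)"
  proof (rule norm_integral_le_except_on[OF _ I(3) C \<eta> M])
    show "(\<lambda>s. h s - h x) integrable_on ?I"
      using I(2) integrable_on_subinterval[OF h] by (auto intro: integrable_diff)
    fix s assume s: "s \<in> ?I"
    show "norm (h s - h x) \<le> \<eta> + 2 * M * indicator C s"
    proof (cases "s \<in> A")
      case False
      then have "s \<in> C"
        using s I(1) by (auto simp: C_def)
      moreover have "s \<in> {a..b}"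
        using s I(2) by blast
      then have "norm (h s - h x) \<le> 2 * M"
        using hb[of s] hb[OF x] norm_triangle_ineq4[of "h s" "h x"] by auto
      ultimately show ?thesis
        using \<eta> by simp
    next
      case True
      with A(2) M show ?thesis
        by (smt (verit) indicator_pos_le mult_nonneg_nonneg)
    qed
  qed
  also have "\<dots> \<le> \<eta> * r + 2 * M * (\<eta> * r)"
  proof (cases "y = x")
    case True
    then have "negligible (C \<inter> ?I)"
      by (intro negligible_subset[OF negligible_sing[of x]]) auto
    with True show ?thesis
      by (simp add: negligible_imp_measure0 r_def)
  next
    case False
    have "measure lebesgue (C \<inter> ?I) \<le> measure lebesgue C"
      using C by (intro measure_mono_fmeasurable) auto
    also have "\<dots> \<le> \<eta> * r"
      using sparse[OF False] by (simp add: C_def r_def)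
    finally show ?thesis
      using I(4) M \<eta> by (intro add_mono mult_left_mono) auto
  qed
  finally show ?thesis
    by (simp add: r_def algebra_simps)
qed

lemma indefinite_integral_has_vector_derivative_at:
  fixes h :: "real \<Rightarrow> 'a::euclidean_space"
  assumes h: "h integrable_on {a..b}" and x: "x \<in> {a<..<b}" and hb: "\<And>s. s \<in> {a..b} \<Longrightarrow> norm (h s) \<le> M"
    and approx: "\<And>\<eta>. \<eta> > 0 \<Longrightarrow> \<exists>A\<in>sets lebesgue. (\<forall>s\<in>A. norm (h s - h x) \<le> \<eta>) \<and>
      (\<exists>\<delta>>0. \<forall>d. 0 < d \<longrightarrow> d < \<delta> \<longrightarrow> measure lebesgue (cball x d - A) \<le> \<eta> * d)"
  shows "((\<lambda>s. integral {a..s} h) has_vector_derivative h x) (at x)"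
  unfolding has_vector_derivative_def has_derivative_at_alt
proof (intro conjI allI impI)
  show "bounded_linear (\<lambda>t. t *\<^sub>R h x)"
    by (rule bounded_linear_scaleR_left)
  fix e :: real assume e: "e > 0"
  have "M \<ge> 0"
    using hb[of x] x by (auto intro: order_trans[OF norm_ge_zero])
  then obtain \<eta> where \<eta>: "\<eta> > 0" "\<eta> * (1 + 2 * M) = e"
    using e by (intro that[of "e / (1 + 2 * M)"]) auto
  obtain A \<delta> where A: "A \<in> sets lebesgue" "\<And>s. s \<in> A \<Longrightarrow> norm (h s - h x) \<le> \<eta>"
    and \<delta>: "\<delta> > 0" "\<And>d. 0 < d \<Longrightarrow> d < \<delta> \<Longrightarrow> measure lebesgue (cball x d - A) \<le> \<eta> * d"
    using approx[OF \<eta>(1)] by blast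
  show "\<exists>d>0. \<forall>y. norm (y - x) < d \<longrightarrow>
      norm (integral {a..y} h - integral {a..x} h - (y - x) *\<^sub>R h x) \<le> e * norm (y - x)"
  proof (intro exI[of _ "min \<delta> (min (x - a) (b - x))"] conjI allI impI)
    show "min \<delta> (min (x - a) (b - x)) > 0"
      using \<delta> x by auto
    fix y assume y: "norm (y - x) < min \<delta> (min (x - a) (b - x))"
    have "norm (integral {a..y} h - integral {a..x} h - (y - x) *\<^sub>R h x) \<le> \<eta> * (1 + 2 * M) * \<bar>y - x\<bar>"
      using x y \<eta>(1) by (intro norm_indefinite_integral_increment_le[OF h _ _ hb _ A] \<delta>(2)) auto
    with \<eta>(2) show "norm (integral {a..y} h - integral {a..x} h - (y - x) *\<^sub>R h x) \<le> e * norm (y - x)"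
      by simp
  qed
qed

text \<open>Lebesgue's differentiation theorem for bounded integrands: x is a Lebesgue point of h
  as soon as each of the countably many sets A q k on which h is close to some q of a dense set
  has density 1 at x whenever it contains x.\<close>
lemma indefinite_integral_has_vector_derivative_AE:
  fixes h :: "real \<Rightarrow> 'a::euclidean_space"
  assumes hm: "h \<in> borel_measurable (lebesgue_on {a..b})" and hb: "\<And>s. s \<in> {a..b} \<Longrightarrow> norm (h s) \<le> M"
  shows "AE x in lebesgue. x \<in> {a<..<b} \<longrightarrow> ((\<lambda>s. integral {a..s} h) has_vector_derivative h x) (at x)"
proof -
  have ab: "{a..b} \<in> sets lebesgue"
    by simp
  have h: "h integrable_on {a..b}"
    using measurable_bounded_by_integrable_imp_absolutely_integrable[OF hm ab integrable_const_ivl hb]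
    by (rule set_lebesgue_integral_eq_integral(1))
  obtain D :: "'a set" where D: "countable D" "UNIV \<subseteq> closure D"
    by (rule separable)
  define A where "A q k = {s \<in> {a..b}. h s \<in> ball q (1 / Suc k)}" for q k
  have "\<forall>S \<in> sets borel. {s \<in> {a..b}. h s \<in> S} \<in> sets lebesgue"
    using hm borel_measurable_lebesgue_on_preimage_borel[OF ab] by blast
  then have A: "A q k \<in> sets lebesgue" for q k
    unfolding A_def using borel_open[OF open_ball] by blast
  define Bad where "Bad q k = {x \<in> A q k. \<forall>\<delta>>0. \<exists>d. 0 < d \<and> d < \<delta> \<and>
      (1 / Suc k) * d < measure lebesgue (cball x d - A q k)}" for q k
  define Bads where "Bads = (\<Union>(q, k)\<in>D \<times> UNIV. Bad q k)"
  have "negligible (Bad q k)" for q k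
    unfolding Bad_def by (rule negligible_sparse_points[OF A]) simp
  then have "negligible Bads"
    unfolding Bads_def using D(1) by (intro negligible_countable_Union countable_image) auto
  moreover have "((\<lambda>s. integral {a..s} h) has_vector_derivative h x) (at x)"
    if x: "x \<in> {a<..<b}" "x \<notin> Bads" for x
  proof (rule indefinite_integral_has_vector_derivative_at[OF h x(1) hb])
    fix \<eta> :: real assume \<eta>: "\<eta> > 0"
    obtain k :: nat where "2 / \<eta> < k"
      using reals_Archimedean2 by blast
    then have k: "2 / Suc k \<le> \<eta>"
      using \<eta> by (simp add: field_simps)
    have "h x \<in> closure D"
      using D(2) by blast
    then obtain q where q: "q \<in> D" "dist q (h x) < 1 / Suc k"
      unfolding closure_approachable by (meson of_nat_0_less_iff zero_less_Suc divide_pos_pos zero_less_one)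
    have near: "norm (h s - h x) \<le> \<eta>" if "s \<in> A q k" for s
    proof -
      have "norm (h s - h x) \<le> norm (h s - q) + norm (q - h x)"
        using norm_triangle_ineq[of "h s - q" "q - h x"] by simp
      also have "\<dots> \<le> 2 / Suc k"
        using that q(2) by (simp add: A_def dist_norm norm_minus_commute)
      finally show ?thesis
        using k by simp
    qed
    have "x \<in> A q k"
      using x(1) q(2) by (simp add: A_def)
    moreover have "x \<notin> Bad q k"
      using x(2) q(1) by (auto simp: Bads_def)
    ultimately have "\<exists>\<delta>>0. \<forall>d. 0 < d \<longrightarrow> d < \<delta> \<longrightarrow> measure lebesgue (cball x d - A q k) \<le> (1 / Suc k) * d"
      unfolding Bad_def by (force simp: not_less)
    moreover have "(1 / Suc k) * d \<le> \<eta> * d" if "d > 0" for d :: real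
      using k that by (intro mult_right_mono) (auto simp: field_simps)
    ultimately show "\<exists>A\<in>sets lebesgue. (\<forall>s\<in>A. norm (h s - h x) \<le> \<eta>) \<and>
        (\<exists>\<delta>>0. \<forall>d. 0 < d \<longrightarrow> d < \<delta> \<longrightarrow> measure lebesgue (cball x d - A) \<le> \<eta> * d)"
      using A[of q k] near by (meson order_trans)
  qed
  ultimately show ?thesis
    by (intro AE_I'[of Bads]) (auto simp: negligible_iff_null_sets)
qed

section \<open>Caratheodory solutions of the control system\<close>

lemma uniform_limit_geometric_increments:
  fixes Y :: "nat \<Rightarrow> 'a \<Rightarrow> 'b::banach"
  assumes "\<And>k s. s \<in> S \<Longrightarrow> norm (Y (Suc k) s - Y k s) \<le> C * (1 / 2) ^ k"
  obtains y where "uniform_limit S Y y sequentially"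
proof -
  have "summable (\<lambda>k. C * (1 / 2 :: real) ^ k)"
    by (intro summable_mult summable_geometric) simp
  then have "uniform_limit S (\<lambda>k s. \<Sum>j<k. Y (Suc j) s - Y j s) (\<lambda>s. \<Sum>j. Y (Suc j) s - Y j s) sequentially"
    using assms by (rule Weierstrass_m_test[rotated])
  then have "uniform_limit S (\<lambda>k s. Y 0 s + (\<Sum>j<k. Y (Suc j) s - Y j s)) (\<lambda>s. Y 0 s + (\<Sum>j. Y (Suc j) s - Y j s)) sequentially"
    by (intro uniform_limit_intros)
  moreover have "(\<lambda>k s. Y 0 s + (\<Sum>j<k. Y (Suc j) s - Y j s)) = Y"
  proof (intro ext)
    fix k s
    show "Y 0 s + (\<Sum>j<k. Y (Suc j) s - Y j s) = Y k s"
      using sum_lessThan_telescope[of "\<lambda>j. Y j s" k] by simp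
  qed
  ultimately show thesis
    using that by simp
qed

lemma integral_exp_abs_dist:
  fixes c :: real
  assumes c: "c > 0"
  shows "integral {min s s0..max s s0} (\<lambda>r. exp (c * \<bar>r - s0\<bar>)) = (exp (c * \<bar>s - s0\<bar>) - 1) / c"
proof -
  have ftc: "((\<lambda>r. exp (c * (r - p))) has_integral (exp (c * (q - p)) - 1) / c) {p..q}" if "p \<le> q" for p q
  proof -
    have "((\<lambda>r. exp (c * (r - p)) / c) has_real_derivative exp (c * (r - p))) (at r)" for r
      using c by (auto intro!: derivative_eq_intros)
    then have "((\<lambda>r. exp (c * (r - p))) has_integral exp (c * (q - p)) / c - exp (c * (p - p)) / c) {p..q}"
      using that by (intro fundamental_theorem_of_calculus)
        (auto simp: has_real_derivative_iff_has_vector_derivative has_vector_derivative_at_within)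
    then show ?thesis
      by (simp add: diff_divide_distrib)
  qed
  show ?thesis
  proof (cases "s0 \<le> s")
    case True
    then have "integral {s0..s} (\<lambda>r. exp (c * \<bar>r - s0\<bar>)) = integral {s0..s} (\<lambda>r. exp (c * (r - s0)))"
      by (intro integral_cong) auto
    with True ftc[OF True] show ?thesis
      by (simp add: integral_unique)
  next
    case False
    have "((\<lambda>r. exp (c * (r - (- s0)))) has_integral (exp (c * ((- s) - (- s0))) - 1) / c) {- s0..- s}"
      using False by (intro ftc) simp
    then have "((\<lambda>r. exp (c * (s0 - r))) has_integral (exp (c * (s0 - s)) - 1) / c) {s..s0}"
      by (subst has_integral_reflect_real[symmetric]) (simp add: algebra_simps)
    moreover have "integral {s..s0} (\<lambda>r. exp (c * \<bar>r - s0\<bar>)) = integral {s..s0} (\<lambda>r. exp (c * (s0 - r)))"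
      by (intro integral_cong) auto
    ultimately show ?thesis
      using False by (simp add: integral_unique)
  qed
qed

lemma controls_nonempty: "U \<noteq> {} \<Longrightarrow> controls U t T \<noteq> {}"
  unfolding controls_def by (auto intro!: exI[of _ "\<lambda>_. SOME v. v \<in> U"] some_in_eq[THEN iffD2])

locale control_system =
  fixes f :: "real \<Rightarrow> 'n::euclidean_space \<Rightarrow> 'm::euclidean_space \<Rightarrow> 'n" and U :: "'m set" and T L :: real
  assumes U_compact: "compact U"
    and f_cont: "continuous_on ({0..T} \<times> UNIV \<times> U) (\<lambda>(s, x, u). f s x u)"
    and f_lip: "\<And>s u x y. s \<in> {0..T} \<Longrightarrow> u \<in> U \<Longrightarrow> norm (f s x u - f s y u) \<le> L * norm (x - y)"
    and L_pos: "L > 0"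
begin

lemma f_linear_growth: "\<exists>M\<ge>0. \<forall>s\<in>{0..T}. \<forall>u\<in>U. \<forall>x. norm (f s x u) \<le> M + L * norm x"
proof -
  define K where "K = {0..T} \<times> {0::'n} \<times> U"
  have "continuous_on K (\<lambda>(s, x, u). f s x u)"
    by (rule continuous_on_subset[OF f_cont]) (auto simp: K_def)
  moreover have "compact K"
    unfolding K_def using U_compact by (intro compact_Times) auto
  ultimately have "compact ((\<lambda>(s, x, u). f s x u) ` K)"
    by (rule compact_continuous_image)
  then obtain B where "\<And>z. z \<in> (\<lambda>(s, x, u). f s x u) ` K \<Longrightarrow> norm z \<le> B"
    by (meson bounded_iff compact_imp_bounded)
  then have B: "norm (f s 0 u) \<le> B" if "s \<in> {0..T}" "u \<in> U" for s u
    using that by (force simp: K_def)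
  show ?thesis
  proof (intro exI[of _ "max B 0"] conjI ballI allI)
    fix s x u assume su: "s \<in> {0..T}" "u \<in> U"
    have "norm (f s x u) \<le> norm (f s 0 u) + norm (f s x u - f s 0 u)"
      using norm_triangle_ineq[of "f s 0 u" "f s x u - f s 0 u"] by simp
    also have "\<dots> \<le> max B 0 + L * norm x"
      using B[OF su] f_lip[OF su, of x 0] by simp
    finally show "norm (f s x u) \<le> max B 0 + L * norm x" .
  qed simp
qed

lemma f_along_measurable:
  assumes t: "0 \<le> t" and y: "continuous_on {t..T} y" and u: "u \<in> controls U t T"
  shows "(\<lambda>s. f s (y s) (u s)) \<in> borel_measurable (lebesgue_on {t..T})"
proof -
  define K where "K = {0..T} \<times> (UNIV :: 'n set) \<times> U"
  define G where "G p = (if p \<in> K then (\<lambda>(s, x, v). f s x v) p else 0)" for p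
  have "closed K"
    unfolding K_def by (intro closed_Times closed_atLeastAtMost closed_UNIV compact_imp_closed[OF U_compact])
  then have "G \<in> borel_measurable borel"
    unfolding G_def using f_cont by (intro borel_measurable_continuous_on_if) (auto simp: K_def)
  moreover have "(\<lambda>s. (s, y s, u s)) \<in> borel_measurable (lebesgue_on {t..T})"
    using u unfolding controls_def
    by (intro borel_measurable_Pair continuous_imp_measurable_on_sets_lebesgue[OF y] continuous_imp_measurable_on_sets_lebesgue[OF continuous_on_id]) auto
  ultimately have Gm: "(\<lambda>s. G (s, y s, u s)) \<in> borel_measurable (lebesgue_on {t..T})"
    using measurable_compose by metis
  have eq: "G (s, y s, u s) = f s (y s) (u s)" if "s \<in> space (lebesgue_on {t..T})" for s
    using that t u by (auto simp: G_def K_def controls_def)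
  have "(\<lambda>s. G (s, y s, u s)) \<in> borel_measurable (lebesgue_on {t..T}) \<longleftrightarrow>
      (\<lambda>s. f s (y s) (u s)) \<in> borel_measurable (lebesgue_on {t..T})"
    by (rule measurable_cong) (rule eq)
  with Gm show ?thesis
    by blast
qed

lemma f_along_bounded:
  assumes t: "0 \<le> t" and y: "continuous_on {t..T} y" and u: "u \<in> controls U t T"
  obtains B where "\<And>s. s \<in> {t..T} \<Longrightarrow> norm (f s (y s) (u s)) \<le> B"
proof -
  obtain M where M: "\<forall>s\<in>{0..T}. \<forall>u\<in>U. \<forall>x. norm (f s x u) \<le> M + L * norm x"
    using f_linear_growth by blast
  obtain R where R: "\<And>s. s \<in> {t..T} \<Longrightarrow> norm (y s) \<le> R"
    using compact_continuous_image[OF y compact_Icc] by (meson bounded_iff compact_imp_bounded imageI)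
  show thesis
  proof (rule that)
    fix s assume s: "s \<in> {t..T}"
    then have "norm (f s (y s) (u s)) \<le> M + L * norm (y s)"
      using t u M by (auto simp: controls_def)
    also have "\<dots> \<le> M + L * R"
      using R[OF s] L_pos by simp
    finally show "norm (f s (y s) (u s)) \<le> M + L * R" .
  qed
qed

lemma f_along_integrable:
  assumes "0 \<le> t" "continuous_on {t..T} y" "u \<in> controls U t T"
  shows "(\<lambda>s. f s (y s) (u s)) integrable_on {t..T}"
proof -
  obtain B where B: "\<And>s. s \<in> {t..T} \<Longrightarrow> norm (f s (y s) (u s)) \<le> B"
    using f_along_bounded[OF assms] by blast
  have "(\<lambda>s. f s (y s) (u s)) absolutely_integrable_on {t..T}"
    by (rule measurable_bounded_by_integrable_imp_absolutely_integrable[OF f_along_measurable[OF assms] _ integrable_const_ivl B]) simp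
  then show ?thesis
    by (rule set_lebesgue_integral_eq_integral(1))
qed

text \<open>The Picard operator of the problem y s0 = \<xi>; the initial value problem is the case
  s0 = t, solving backwards from the final time is the case s0 = T.\<close>
definition picard :: "real \<Rightarrow> real \<Rightarrow> 'n \<Rightarrow> (real \<Rightarrow> 'm) \<Rightarrow> (real \<Rightarrow> 'n) \<Rightarrow> real \<Rightarrow> 'n" where
  "picard t s0 \<xi> u y s = \<xi> + integral {t..s} (\<lambda>r. f r (y r) (u r)) - integral {t..s0} (\<lambda>r. f r (y r) (u r))"

lemma continuous_on_picard:
  assumes "0 \<le> t" "u \<in> controls U t T" "continuous_on {t..T} y"
  shows "continuous_on {t..T} (picard t s0 \<xi> u y)"
  unfolding picard_def
  using indefinite_integral_continuous_1[OF f_along_integrable[OF assms(1,3,2)]]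
  by (intro continuous_intros)

lemma norm_picard_diff_le:
  assumes t: "0 \<le> t" and u: "u \<in> controls U t T" and s0: "s0 \<in> {t..T}" and s: "s \<in> {t..T}"
    and y: "continuous_on {t..T} y" and z: "continuous_on {t..T} z"
  shows "norm (picard t s0 \<xi> u y s - picard t s0 \<xi> u z s)
    \<le> integral {min s s0..max s s0} (\<lambda>r. L * norm (y r - z r))"
proof -
  define D where "D r = f r (y r) (u r) - f r (z r) (u r)" for r
  have fy: "(\<lambda>r. f r (y r) (u r)) integrable_on {t..v}" and fz: "(\<lambda>r. f r (z r) (u r)) integrable_on {t..v}"
    if "v \<in> {t..T}" for v
    using that f_along_integrable[OF t y u] f_along_integrable[OF t z u]
    by (auto intro: integrable_on_subinterval)
  have D: "D integrable_on {t..T}"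
    unfolding D_def using f_along_integrable[OF t y u] f_along_integrable[OF t z u] by (rule integrable_diff)
  have "picard t s0 \<xi> u y s - picard t s0 \<xi> u z s = integral {t..s} D - integral {t..s0} D"
    unfolding picard_def D_def using fy fz s s0 by (simp add: integral_diff algebra_simps)
  then have "norm (picard t s0 \<xi> u y s - picard t s0 \<xi> u z s) = norm (integral {min s s0..max s s0} D)"
    using norm_indefinite_integral_diff[OF D s0 s] by (simp add: min.commute max.commute)
  also have "\<dots> \<le> integral {min s s0..max s s0} (\<lambda>r. L * norm (y r - z r))"
  proof (rule integral_norm_bound_integral)
    have sub: "{min s s0..max s s0} \<subseteq> {t..T}"
      using s s0 by auto
    show "D integrable_on {min s s0..max s s0}"
      by (rule integrable_on_subinterval[OF D sub])
    show "(\<lambda>r. L * norm (y r - z r)) integrable_on {min s s0..max s s0}"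
      using continuous_on_subset[OF y sub] continuous_on_subset[OF z sub]
      by (intro integrable_continuous_interval continuous_intros)
    fix r assume "r \<in> {min s s0..max s s0}"
    then have "r \<in> {t..T}"
      using sub by blast
    then have "r \<in> {0..T}" "u r \<in> U"
      using t u by (auto simp: controls_def)
    then show "norm (D r) \<le> L * norm (y r - z r)"
      unfolding D_def by (rule f_lip)
  qed
  finally show ?thesis .
qed

lemma picard_iterate_increment_le:
  assumes t: "0 \<le> t" and u: "u \<in> controls U t T" and s0: "s0 \<in> {t..T}"
    and C: "\<And>s. s \<in> {t..T} \<Longrightarrow> norm (picard t s0 \<xi> u (\<lambda>_. \<xi>) s - \<xi>) \<le> C"
    and s: "s \<in> {t..T}"
  shows "norm (((picard t s0 \<xi> u) ^^ Suc k) (\<lambda>_. \<xi>) s - ((picard t s0 \<xi> u) ^^ k) (\<lambda>_. \<xi>) s)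
    \<le> C * (1 / 2) ^ k * exp (2 * L * \<bar>s - s0\<bar>)"
proof -
  have C0: "0 \<le> C"
    using C[OF s] by (meson norm_ge_zero order_trans)
  show ?thesis
    using s
proof (induction k arbitrary: s)
  case 0
  have "C * 1 \<le> C * exp (2 * L * \<bar>s - s0\<bar>)"
    using C0 L_pos by (intro mult_left_mono) auto
  with C[OF 0] show ?case
    by simp
next
  case (Suc k)
  let ?Y = "\<lambda>k. ((picard t s0 \<xi> u) ^^ k) (\<lambda>_. \<xi>)"
  have Y: "continuous_on {t..T} (?Y k)" for k
    by (induction k) (auto intro: continuous_on_picard[OF t u])
  have sub: "{min s s0..max s s0} \<subseteq> {t..T}"
    using Suc.prems s0 by auto
  have "norm (?Y (Suc (Suc k)) s - ?Y (Suc k) s)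
      \<le> integral {min s s0..max s s0} (\<lambda>r. L * norm (?Y (Suc k) r - ?Y k r))"
    using norm_picard_diff_le[OF t u s0 Suc.prems Y[of "Suc k"] Y[of k], where \<xi> = \<xi>] by simp
  also have "\<dots> \<le> integral {min s s0..max s s0} (\<lambda>r. L * (C * (1 / 2) ^ k) * exp (2 * L * \<bar>r - s0\<bar>))"
  proof (rule integral_le)
    show "(\<lambda>r. L * norm (?Y (Suc k) r - ?Y k r)) integrable_on {min s s0..max s s0}"
      using continuous_on_subset[OF Y sub] by (intro integrable_continuous_interval continuous_intros)
    show "(\<lambda>r. L * (C * (1 / 2) ^ k) * exp (2 * L * \<bar>r - s0\<bar>)) integrable_on {min s s0..max s s0}"
      by (intro integrable_continuous_interval continuous_intros)
    fix r assume "r \<in> {min s s0..max s s0}"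
    then have "r \<in> {t..T}"
      using sub by blast
    from mult_left_mono[OF Suc.IH[OF this] less_imp_le[OF L_pos]]
    show "L * norm (?Y (Suc k) r - ?Y k r) \<le> L * (C * (1 / 2) ^ k) * exp (2 * L * \<bar>r - s0\<bar>)"
      by (simp add: mult.assoc)
  qed
  also have "\<dots> = L * (C * (1 / 2) ^ k) * ((exp (2 * L * \<bar>s - s0\<bar>) - 1) / (2 * L))"
    using L_pos by (simp add: integral_exp_abs_dist)
  also have "\<dots> \<le> C * (1 / 2) ^ Suc k * exp (2 * L * \<bar>s - s0\<bar>)"
    using L_pos C0 by (simp add: field_simps)
  finally show ?case .
qed
qed

lemma picard_uniform_limit:
  assumes t: "0 \<le> t" and u: "u \<in> controls U t T" and s0: "s0 \<in> {t..T}" and s: "s \<in> {t..T}"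
    and Y: "\<And>k. continuous_on {t..T} (Y k)" and y: "continuous_on {t..T} y"
    and lim: "uniform_limit {t..T} Y y sequentially"
  shows "(\<lambda>k. picard t s0 \<xi> u (Y k) s) \<longlonglongrightarrow> picard t s0 \<xi> u y s"
  unfolding tendsto_iff
proof (intro allI impI)
  fix e :: real assume e: "e > 0"
  define e' where "e' = e / (L * (T - t) + 1)"
  have LT: "L * (T - t) \<ge> 0"
    using L_pos s by simp
  then have e': "e' > 0" "L * (T - t) * e' < e"
    using e by (auto simp: e'_def field_simps)
  have sub: "{min s s0..max s s0} \<subseteq> {t..T}"
    using s s0 by auto
  have "\<forall>\<^sub>F k in sequentially. \<forall>r\<in>{t..T}. dist (Y k r) (y r) < e'"
    using lim e'(1) unfolding uniform_limit_iff by blast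
  then show "\<forall>\<^sub>F k in sequentially. dist (picard t s0 \<xi> u (Y k) s) (picard t s0 \<xi> u y s) < e"
  proof (rule eventually_mono)
    fix k assume close: "\<forall>r\<in>{t..T}. dist (Y k r) (y r) < e'"
    have "dist (picard t s0 \<xi> u (Y k) s) (picard t s0 \<xi> u y s)
        \<le> integral {min s s0..max s s0} (\<lambda>r. L * norm (Y k r - y r))"
      unfolding dist_norm by (rule norm_picard_diff_le[OF t u s0 s Y y])
    also have "\<dots> \<le> integral {min s s0..max s s0} (\<lambda>r. L * e')"
    proof (rule integral_le)
      show "(\<lambda>r. L * norm (Y k r - y r)) integrable_on {min s s0..max s s0}"
        using continuous_on_subset[OF Y sub] continuous_on_subset[OF y sub]
        by (intro integrable_continuous_interval continuous_intros)
      fix r assume "r \<in> {min s s0..max s s0}"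
      then have "r \<in> {t..T}"
        using sub by blast
      then have "norm (Y k r - y r) \<le> e'"
        using close by (auto simp: dist_norm less_imp_le)
      then show "L * norm (Y k r - y r) \<le> L * e'"
        using L_pos by (intro mult_left_mono) auto
    qed (rule integrable_const_ivl)
    also have "\<dots> \<le> L * (T - t) * e'"
      using sub s s0 L_pos e'(1) by (auto simp: min_def max_def)
    also have "\<dots> < e"
      by (rule e'(2))
    finally show "dist (picard t s0 \<xi> u (Y k) s) (picard t s0 \<xi> u y s) < e" .
  qed
qed

lemma picard_fixed_point:
  assumes t: "0 \<le> t" and u: "u \<in> controls U t T" and s0: "s0 \<in> {t..T}"
  obtains y where "continuous_on {t..T} y" "\<And>s. s \<in> {t..T} \<Longrightarrow> y s = picard t s0 \<xi> u y s"
proof -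
  define Y where "Y k = ((picard t s0 \<xi> u) ^^ k) (\<lambda>_. \<xi>)" for k
  have Y: "continuous_on {t..T} (Y k)" for k
    unfolding Y_def by (induction k) (auto intro: continuous_on_picard[OF t u])
  obtain C where C: "\<And>s. s \<in> {t..T} \<Longrightarrow> norm (picard t s0 \<xi> u (\<lambda>_. \<xi>) s - \<xi>) \<le> C"
    using compact_continuous_image[OF continuous_on_diff[OF continuous_on_picard[OF t u continuous_on_const] continuous_on_const] compact_Icc]
    by (meson compact_imp_bounded bounded_iff imageI)
  have C0: "0 \<le> C"
    using C[OF s0] by (meson norm_ge_zero order_trans)
  define E where "E = exp (2 * L * (T - t))"
  have "norm (Y (Suc k) s - Y k s) \<le> (C * E) * (1 / 2) ^ k" if s: "s \<in> {t..T}" for k s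
  proof -
    have "norm (Y (Suc k) s - Y k s) \<le> C * (1 / 2) ^ k * exp (2 * L * \<bar>s - s0\<bar>)"
      unfolding Y_def by (rule picard_iterate_increment_le[OF t u s0 C s])
    also have "\<dots> \<le> C * (1 / 2) ^ k * E"
      unfolding E_def using s s0 L_pos C0 by (intro mult_left_mono) auto
    finally show ?thesis
      by (simp add: mult_ac)
  qed
  then obtain y where lim: "uniform_limit {t..T} Y y sequentially"
    by (rule uniform_limit_geometric_increments)
  have y: "continuous_on {t..T} y"
    using Y lim by (intro uniform_limit_theorem) auto
  show thesis
  proof (rule that[OF y])
    fix s assume s: "s \<in> {t..T}"
    have "(\<lambda>k. Y (Suc k) s) \<longlonglongrightarrow> y s"
      using tendsto_uniform_limitI[OF lim s] by (rule LIMSEQ_Suc)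
    moreover have "(\<lambda>k. Y (Suc k) s) \<longlonglongrightarrow> picard t s0 \<xi> u y s"
      using picard_uniform_limit[OF t u s0 s Y y lim] by (simp add: Y_def)
    ultimately show "y s = picard t s0 \<xi> u y s"
      by (rule LIMSEQ_unique)
  qed
qed

lemma exists_solution_through:
  assumes t: "0 \<le> t" and u: "u \<in> controls U t T" and s0: "s0 \<in> {t..T}"
  obtains z where "is_solution f t T (z t) u z" "\<And>s. s \<notin> {t..T} \<Longrightarrow> z s = z t" "z s0 = \<xi>"
proof -
  obtain y where y: "continuous_on {t..T} y" and fix_y: "\<And>s. s \<in> {t..T} \<Longrightarrow> y s = picard t s0 \<xi> u y s"
    using picard_fixed_point[OF t u s0] by blast
  define h where "h = (\<lambda>r. f r (y r) (u r))"
  define G where "G s = integral {t..s} h" for s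
  have yG: "y s = \<xi> - G s0 + G s" if "s \<in> {t..T}" for s
    using fix_y[OF that] by (simp add: picard_def G_def h_def)
  obtain B where B: "\<And>s. s \<in> {t..T} \<Longrightarrow> norm (h s) \<le> B"
    using f_along_bounded[OF t y u] unfolding h_def by blast
  have h: "h integrable_on {t..T}"
    unfolding h_def by (rule f_along_integrable[OF t y u])
  define z where "z s = (if s \<in> {t..T} then y s else y t)" for s
  have ac: "abs_cont_on t T z"
  proof (rule abs_cont_on_dominated[OF abs_cont_on_indefinite_integral[OF h B], where K=1])
    fix s r assume "s \<in> {t..T}" "r \<in> {t..T}"
    then have "z s - z r = integral {t..s} h - integral {t..r} h"
      by (simp add: z_def yG G_def)
    then show "norm (z s - z r) \<le> 1 * norm (integral {t..s} h - integral {t..r} h)"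
      by simp
  qed
  have "h \<in> borel_measurable (lebesgue_on {t..T})"
    unfolding h_def by (rule f_along_measurable[OF t y u])
  then have "AE s in lebesgue. s \<in> {t<..<T} \<longrightarrow> (G has_vector_derivative h s) (at s)"
    unfolding G_def using B by (rule indefinite_integral_has_vector_derivative_AE)
  then have der: "AE s in lebesgue. s \<in> {t<..<T} \<longrightarrow> (z has_vector_derivative f s (z s) (u s)) (at s)"
  proof (rule eventually_mono, intro impI)
    fix s assume "s \<in> {t<..<T} \<longrightarrow> (G has_vector_derivative h s) (at s)" and s: "s \<in> {t<..<T}"
    then have "((\<lambda>r. \<xi> - G s0 + G r) has_vector_derivative h s) (at s)"
      unfolding G_def by (auto intro!: derivative_eq_intros)
    then have "(z has_vector_derivative h s) (at s)"
      by (rule has_vector_derivative_transform_within_open[OF _ open_greaterThanLessThan s])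
        (simp add: z_def yG)
    then show "(z has_vector_derivative f s (z s) (u s)) (at s)"
      using s by (simp add: h_def z_def)
  qed
  show thesis
  proof (rule that)
    show "is_solution f t T (z t) u z"
      unfolding is_solution_def using ac der by simp
    show "z s0 = \<xi>"
      using s0 yG[OF s0] by (simp add: z_def)
    show "z s = z t" if "s \<notin> {t..T}" for s
      using that s0 by (auto simp: z_def)
  qed
qed

lemma solutions_inner_diff_growth:
  assumes t: "0 \<le> t" and u: "u \<in> controls U t T"
    and z1: "is_solution f t T x1 u z1" and z2: "is_solution f t T x2 u z2"
    and s1: "s1 \<in> {t..T}" and s2: "s2 \<in> {t..T}" and e: "e > 0"
  shows "e + (z1 s2 - z2 s2) \<bullet> (z1 s2 - z2 s2) \<le> exp (2 * L * \<bar>s2 - s1\<bar>) * (e + (z1 s1 - z2 s1) \<bullet> (z1 s1 - z2 s1))"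
proof (rule abs_cont_on_inner_self_growth[OF _ e _ s1 s2])
  show "abs_cont_on t T (\<lambda>s. z1 s - z2 s)"
    using z1 z2 unfolding is_solution_def by (blast intro: abs_cont_on_diff)
  have "AE s in lebesgue. s \<in> {t<..<T} \<longrightarrow>
      (z1 has_vector_derivative f s (z1 s) (u s)) (at s) \<and> (z2 has_vector_derivative f s (z2 s) (u s)) (at s)"
    using z1 z2 unfolding is_solution_def by (auto elim: eventually_elim2)
  then show "AE s in lebesgue. s \<in> {t<..<T} \<longrightarrow> (\<exists>w'. ((\<lambda>s. z1 s - z2 s) has_vector_derivative w') (at s) \<and>
      \<bar>2 * ((z1 s - z2 s) \<bullet> w')\<bar> \<le> 2 * L * (e + (z1 s - z2 s) \<bullet> (z1 s - z2 s)))"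
  proof (rule eventually_mono, intro impI)
    fix s assume H: "s \<in> {t<..<T} \<longrightarrow> (z1 has_vector_derivative f s (z1 s) (u s)) (at s) \<and>
        (z2 has_vector_derivative f s (z2 s) (u s)) (at s)" and s: "s \<in> {t<..<T}"
    let ?w' = "f s (z1 s) (u s) - f s (z2 s) (u s)"
    have "norm ?w' \<le> 0 + L * norm (z1 s - z2 s)"
      using s t u by (auto simp: controls_def intro: f_lip)
    then have "\<bar>2 * ((z1 s - z2 s) \<bullet> ?w')\<bar> \<le> 2 * L * ((z1 s - z2 s) \<bullet> (z1 s - z2 s))"
      using abs_two_inner_le[of ?w' 0 L "z1 s - z2 s"] L_pos by simp
    also have "\<dots> \<le> 2 * L * (e + (z1 s - z2 s) \<bullet> (z1 s - z2 s))"
      using L_pos e by simp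
    finally show "\<exists>w'. ((\<lambda>s. z1 s - z2 s) has_vector_derivative w') (at s) \<and>
        \<bar>2 * ((z1 s - z2 s) \<bullet> w')\<bar> \<le> 2 * L * (e + (z1 s - z2 s) \<bullet> (z1 s - z2 s))"
      using H s by (blast intro: has_vector_derivative_diff)
  qed
qed

lemma solution_dist_le:
  assumes t: "0 \<le> t" and u: "u \<in> controls U t T"
    and z1: "is_solution f t T x1 u z1" and z2: "is_solution f t T x2 u z2"
    and s1: "s1 \<in> {t..T}" and s2: "s2 \<in> {t..T}"
  shows "norm (z1 s2 - z2 s2) \<le> exp (L * \<bar>s2 - s1\<bar>) * norm (z1 s1 - z2 s1)"
proof -
  define w where "w s = z1 s - z2 s" for s
  define E where "E = exp (2 * L * \<bar>s2 - s1\<bar>)"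
  have E: "E \<ge> 1"
    unfolding E_def using L_pos by simp
  have "w s2 \<bullet> w s2 \<le> E * (w s1 \<bullet> w s1) + e" if e: "e > 0" for e
  proof -
    have "w s2 \<bullet> w s2 \<le> e / E + w s2 \<bullet> w s2"
      using e E by simp
    also have "\<dots> \<le> E * (e / E + w s1 \<bullet> w s1)"
      unfolding w_def E_def using e E by (intro solutions_inner_diff_growth[OF t u z1 z2 s1 s2]) simp
    also have "\<dots> = E * (w s1 \<bullet> w s1) + e"
      using E by (simp add: field_simps)
    finally show ?thesis .
  qed
  then have "w s2 \<bullet> w s2 \<le> E * (w s1 \<bullet> w s1)"
    by (rule field_le_epsilon)
  then have "(norm (w s2))\<^sup>2 \<le> (exp (L * \<bar>s2 - s1\<bar>) * norm (w s1))\<^sup>2"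
    unfolding E_def by (simp add: power2_norm_eq_inner power_mult_distrib exp_double[symmetric] mult.assoc)
  then show ?thesis
    unfolding w_def by (rule power2_le_imp_le) simp
qed

lemma traj_eqI:
  assumes t: "0 \<le> t" and u: "u \<in> controls U t T"
    and z: "is_solution f t T x u z" and outside: "\<And>s. s \<notin> {t..T} \<Longrightarrow> z s = x"
  shows "traj f t T x u = z"
  unfolding traj_def
proof (rule the_equality)
  show "is_solution f t T x u z \<and> (\<forall>s. s \<notin> {t..T} \<longrightarrow> z s = x)"
    using z outside by blast
  fix z' assume z': "is_solution f t T x u z' \<and> (\<forall>s. s \<notin> {t..T} \<longrightarrow> z' s = x)"
  have "z' s = z s" for s
  proof (cases "s \<in> {t..T}")
    case True
    then have tt: "t \<in> {t..T}"
      by simp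
    have "norm (z' s - z s) \<le> exp (L * \<bar>s - t\<bar>) * norm (z' t - z t)"
      using z' by (intro solution_dist_le[OF t u _ z tt True]) blast
    also have "z' t - z t = 0"
      using z z' unfolding is_solution_def by simp
    finally show ?thesis
      by simp
  qed (use z' outside in simp)
  then show "z' = z" ..
qed

lemma traj_solution:
  assumes t: "0 \<le> t" "t \<le> T" and u: "u \<in> controls U t T"
  shows "is_solution f t T x u (traj f t T x u)" "traj f t T x u t = x"
proof -
  obtain z where z: "is_solution f t T (z t) u z" "\<And>s. s \<notin> {t..T} \<Longrightarrow> z s = z t" "z t = x"
    using exists_solution_through[OF t(1) u, of t x] t by auto
  have "traj f t T x u = z"
    using z by (intro traj_eqI[OF t(1) u]) auto
  with z show "is_solution f t T x u (traj f t T x u)" "traj f t T x u t = x"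
    by auto
qed

lemma traj_endpoint_bounded:
  assumes t: "0 \<le> t" "t \<le> T"
  obtains R where "\<And>u. u \<in> controls U t T \<Longrightarrow> norm (traj f t T x u T) \<le> R"
proof -
  obtain M where M: "M \<ge> 0" "\<forall>s\<in>{0..T}. \<forall>u\<in>U. \<forall>x. norm (f s x u) \<le> M + L * norm x"
    using f_linear_growth by blast
  define K where "K = M + 2 * L"
  have "norm (traj f t T x u T) \<le> sqrt (exp (K * (T - t)) * (1 + x \<bullet> x))" if u: "u \<in> controls U t T" for u
  proof -
    define z where "z = traj f t T x u"
    have z: "is_solution f t T x u z" "z t = x"
      unfolding z_def using traj_solution[OF t u] by auto
    have "1 + z T \<bullet> z T \<le> exp (K * \<bar>T - t\<bar>) * (1 + z t \<bullet> z t)"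
    proof (rule abs_cont_on_inner_self_growth)
      show "abs_cont_on t T z"
        using z(1) unfolding is_solution_def by blast
      show "AE s in lebesgue. s \<in> {t<..<T} \<longrightarrow>
          (\<exists>z'. (z has_vector_derivative z') (at s) \<and> \<bar>2 * (z s \<bullet> z')\<bar> \<le> K * (1 + z s \<bullet> z s))"
      proof (rule eventually_mono[OF z(1)[unfolded is_solution_def, THEN conjunct2, THEN conjunct2]], intro impI)
        fix s assume H: "s \<in> {t<..<T} \<longrightarrow> (z has_vector_derivative f s (z s) (u s)) (at s)" and s: "s \<in> {t<..<T}"
        have "norm (f s (z s) (u s)) \<le> M + L * norm (z s)"
          using M(2) s t u by (auto simp: controls_def)
        then have "\<bar>2 * (z s \<bullet> f s (z s) (u s))\<bar> \<le> M * (1 + z s \<bullet> z s) + 2 * L * (z s \<bullet> z s)"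
          using M(1) L_pos by (intro abs_two_inner_le) auto
        also have "\<dots> \<le> K * (1 + z s \<bullet> z s)"
          using L_pos by (simp add: K_def algebra_simps)
        finally show "\<exists>z'. (z has_vector_derivative z') (at s) \<and> \<bar>2 * (z s \<bullet> z')\<bar> \<le> K * (1 + z s \<bullet> z s)"
          using H s by blast
      qed
    qed (use t in auto)
    then show ?thesis
      using z(2) t by (intro real_le_rsqrt) (simp add: power2_norm_eq_inner mult.commute z_def)
  qed
  then show thesis
    by (rule that)
qed

end

section \<open>The value function\<close>

lemma classZ_near_zero_infimum:
  fixes g :: "'a::{real_normed_vector, heine_borel} \<Rightarrow> real"
  assumes g: "continuous_on UNIV g" "classZ g"
    and A: "bounded A" "A \<noteq> {}" and inf: "(INF a\<in>A. g a) = 0" and \<rho>: "\<rho> > 0"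
  obtains a y where "a \<in> A" "norm (y - a) < \<rho>" "g y < 0"
proof -
  have "compact (closure A)"
    using A(1) by (simp add: compact_eq_bounded_closed bounded_closure)
  moreover have "closure A \<noteq> {}"
    using A(2) by simp
  ultimately obtain l where l: "l \<in> closure A" and l_min: "\<And>x. x \<in> closure A \<Longrightarrow> g l \<le> g x"
    using continuous_attains_inf[of "closure A" g] continuous_on_subset[OF g(1)] by blast
  have "bdd_below (g ` A)"
    using l_min by (intro bdd_belowI[of _ "g l"]) (auto intro: closure_subset[THEN subsetD])
  then have "0 \<le> g a" if "a \<in> A" for a
    using cINF_lower[OF _ that] inf by metis
  then have "closure A \<subseteq> {x. 0 \<le> g x}"
    using g(1) by (intro closure_minimal closed_Collect_le continuous_intros) auto
  then have "0 \<le> g l"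
    using l by blast
  moreover have "g l \<le> 0"
    unfolding inf[symmetric] using A(2) l_min by (intro cINF_greatest) (auto intro: closure_subset[THEN subsetD])
  ultimately have "g l = 0"
    by simp
  then obtain y where y: "norm (y - l) < \<rho> / 2" "g y < 0"
    using g(2) \<rho> unfolding classZ_def by (meson half_gt_zero)
  obtain a where a: "a \<in> A" "dist a l < \<rho> / 2"
    using l \<rho> unfolding closure_approachable by (meson half_gt_zero)
  have "norm (y - a) \<le> norm (y - l) + norm (l - a)"
    using norm_triangle_ineq[of "y - l" "l - a"] by simp
  also have "\<dots> < \<rho>"
    using y(1) a(2) by (simp add: dist_norm norm_minus_commute)
  finally show thesis
    using that a(1) y(2) by blast
qed

context control_system
begin

lemma value_fun_le:
  assumes t: "0 \<le> t" "t \<le> T" and g: "continuous_on UNIV g" and u: "u \<in> controls U t T"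
  shows "value_fun f U g T t x \<le> g (traj f t T x u T)"
proof -
  obtain R where R: "\<And>u. u \<in> controls U t T \<Longrightarrow> norm (traj f t T x u T) \<le> R"
    using traj_endpoint_bounded[OF t] by blast
  obtain m where "\<And>y. y \<in> cball 0 R \<Longrightarrow> g m \<le> g y"
    using continuous_attains_inf[of "cball 0 R" g] continuous_on_subset[OF g] R[OF u]
    by (metis compact_cball cball_eq_empty empty_iff mem_cball_0 not_less order_trans norm_ge_zero subset_UNIV)
  then have "bdd_below ((\<lambda>u. g (traj f t T x u T)) ` controls U t T)"
    using R by (intro bdd_belowI[of _ "g m"]) auto
  then show ?thesis
    unfolding value_fun_def using u by (rule cINF_lower)
qed

lemma classZ_value_fun:
  assumes t: "0 \<le> t" "t \<le> T" and U_ne: "U \<noteq> {}" and g: "continuous_on UNIV g" "classZ g"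
  shows "classZ (\<lambda>x. value_fun f U g T t x)"
  unfolding classZ_def
proof (intro allI impI)
  fix xb r assume v0: "value_fun f U g T t xb = 0" and r: "(r::real) > 0"
  define A where "A = (\<lambda>u. traj f t T xb u T) ` controls U t T"
  define \<rho> where "\<rho> = r / exp (L * (T - t))"
  have bdd: "bounded A"
    unfolding A_def using traj_endpoint_bounded[OF t] by (metis (no_types, lifting) bounded_iff imageE)
  have ne: "A \<noteq> {}"
    unfolding A_def using controls_nonempty[OF U_ne] by blast
  have inf: "(INF a\<in>A. g a) = 0"
    using v0 unfolding A_def value_fun_def by (simp add: image_comp comp_def)
  have \<rho>: "\<rho> > 0"
    using r by (simp add: \<rho>_def)
  obtain a y' where a: "a \<in> A" and y': "norm (y' - a) < \<rho>" "g y' < 0"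
    by (rule classZ_near_zero_infimum[OF g bdd ne inf \<rho>])
  then obtain u where u: "u \<in> controls U t T" and a_eq: "a = traj f t T xb u T"
    unfolding A_def by blast
  have T: "T \<in> {t..T}" and tt: "t \<in> {t..T}"
    using t by auto
  obtain z where z: "is_solution f t T (z t) u z" "\<And>s. s \<notin> {t..T} \<Longrightarrow> z s = z t" "z T = y'"
    using exists_solution_through[OF t(1) u T] by blast
  have traj_z: "traj f t T (z t) u = z"
    using z by (intro traj_eqI[OF t(1) u]) auto
  have "norm (z t - xb) \<le> exp (L * (T - t)) * norm (y' - traj f t T xb u T)"
    using solution_dist_le[OF t(1) u z(1) traj_solution(1)[OF t u] T tt] traj_solution(2)[OF t u] z(3) t
    by simp
  also have "\<dots> < exp (L * (T - t)) * \<rho>"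
    using y'(1) a_eq by simp
  also have "\<dots> = r"
    by (simp add: \<rho>_def)
  finally have "norm (z t - xb) < r" .
  moreover have "value_fun f U g T t (z t) < 0"
    using value_fun_le[OF t g(1) u, of "z t"] traj_z z(3) y'(2) by simp
  ultimately show "\<exists>x. norm (x - xb) < r \<and> value_fun f U g T t x < 0"
    by blast
qed

end

theorem lemma4:
  fixes T :: real
    and U :: "(real ^ 'm) set"
    and f :: "real \<Rightarrow> real ^ 'n \<Rightarrow> real ^ 'm \<Rightarrow> real ^ 'n"
    and g :: "real ^ 'n \<Rightarrow> real"
  assumes T_pos: "T > 0"
    and U_compact: "compact U" and U_ne: "U \<noteq> {}"
    and f_cont: "continuous_on ({0..T} \<times> UNIV \<times> U) (\<lambda>(s, x, u). f s x u)"
    and f_lip: "\<exists>L. \<forall>s\<in>{0..T}. \<forall>u\<in>U. \<forall>x y. norm (f s x u - f s y u) \<le> L * norm (x - y)"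
    and f_convex: "\<And>s x. s \<in> {0..T} \<Longrightarrow> convex ((\<lambda>u. f s x u) ` U)"
    and g_cont: "continuous_on UNIV g"
    and g_Z: "classZ g"
  shows "\<forall>t\<in>{0..T}. classZ (\<lambda>x. value_fun f U g T t x)"
proof -
  obtain L where L: "\<forall>s\<in>{0..T}. \<forall>u\<in>U. \<forall>x y. norm (f s x u - f s y u) \<le> L * norm (x - y)"
    using f_lip by blast
  interpret control_system f U T "\<bar>L\<bar> + 1"
  proof
    fix s u x y assume "s \<in> {0..T}" "u \<in> U"
    then have "norm (f s x u - f s y u) \<le> L * norm (x - y)"
      using L by blast
    also have "\<dots> \<le> (\<bar>L\<bar> + 1) * norm (x - y)"
      by (intro mult_right_mono) auto
    finally show "norm (f s x u - f s y u) \<le> (\<bar>L\<bar> + 1) * norm (x - y)" .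
  qed (use U_compact f_cont in auto)
  show ?thesis
    using classZ_value_fun U_ne g_cont g_Z by auto
qed

end
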